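(* For every $k\geq 4$, the group $\mathrm{PFB}_k$ is not virtually a product of two infinite groups.
   Context: $\mathrm{FB}_k=\langle \sigma_1,\ldots,\sigma_{k-1}\mid \sigma_i^2=1,\ [\sigma_i,\sigma_j]=1 \text{ whenever } |i-j|\ge 2\rangle$, and $\mathrm{PFB}_k$ is the kernel of the homomorphism $\mathrm{FB}_k\to\mathrm{Sym}(k)$ sending $\sigma_i$ to $(i,i+1)$. *)

theory Defs
  imports "HOL-Algebra.Algebra" "HOL-Combinatorics.Transposition"
begin

text \<open>Elementary moves of the presentation of FB_k on words over the
  generators 1..k-1 (letter i stands for sigma_i): cancel sigma_i sigma_i,
  and commute sigma_i sigma_j when |i-j| >= 2.\<close>
inductive fb_step :: "nat \<Rightarrow> nat list \<Rightarrow> nat list \<Rightarrow> bool" for k where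
  cancel: "i \<in> {1..<k} \<Longrightarrow> fb_step k (xs @ [i, i] @ ys) (xs @ ys)"
| comm: "i \<in> {1..<k} \<Longrightarrow> j \<in> {1..<k} \<Longrightarrow> 2 \<le> \<bar>int i - int j\<bar> \<Longrightarrow>
         fb_step k (xs @ [i, j] @ ys) (xs @ [j, i] @ ys)"

definition fb_eq :: "nat \<Rightarrow> nat list \<Rightarrow> nat list \<Rightarrow> bool" where
  "fb_eq k = (sup (fb_step k) (fb_step k)\<inverse>\<inverse>)\<^sup>*\<^sup>*"

definition fb_class :: "nat \<Rightarrow> nat list \<Rightarrow> nat list set" where
  "fb_class k w = {v. fb_eq k w v}"

definition fb_mult :: "nat \<Rightarrow> nat list set \<Rightarrow> nat list set \<Rightarrow> nat list set" where
  "fb_mult k P Q = {v. \<exists>p\<in>P. \<exists>q\<in>Q. fb_eq k (p @ q) v}"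

text \<open>FB_k as the group presented by the given generators and relations
  (since all generators are involutions, the quotient of the free monoid is
  the presented group).\<close>
definition FB :: "nat \<Rightarrow> nat list set monoid" where
  "FB k = \<lparr> carrier = {fb_class k w | w. set w \<subseteq> {1..<k}},
            monoid.mult = fb_mult k,
            monoid.one = fb_class k [] \<rparr>"

definition perm_of_word :: "nat list \<Rightarrow> nat \<Rightarrow> nat" where
  "perm_of_word w = foldr (\<lambda>i p. transpose i (Suc i) \<circ> p) w id"

definition PFB :: "nat \<Rightarrow> nat list set monoid" where
  "PFB k = FB k \<lparr> carrier := {C \<in> carrier (FB k). \<forall>w\<in>C. perm_of_word w = id} \<rparr>"

end

theory Submission
  imports Defs
begin

text \<open>\<open>FB\<^sub>k\<close> is the right-angled Coxeter group of the path \<open>\<sigma>\<^sub>1 - \<sigma>\<^sub>2 - \<dots> - \<sigma>\<^sub>k\<^sub>-\<^sub>1\<close>, and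
  \<open>PFB\<^sub>k\<close> has finite index in it. Reduced words of \<open>FB\<^sub>k\<close> are unique up to commuting far apart
  letters, and the zigzag \<open>x = \<sigma>\<^sub>1 \<sigma>\<^sub>2 \<cdots> \<sigma>\<^sub>k\<^sub>-\<^sub>1 \<sigma>\<^sub>k\<^sub>-\<^sub>2 \<cdots> \<sigma>\<^sub>2\<close> is a cyclically reduced
  walk through the whole diagram. Comparing the reduced forms of \<open>h x\<^sup>N\<close> and \<open>x\<^sup>N h\<close> shows that
  every element commuting with a nontrivial power of \<open>x\<close> is itself a power of \<open>x\<close>.

  A finite index subgroup \<open>H\<close> of \<open>PFB\<^sub>k\<close> contains some \<open>x\<^sup>m\<close>. If \<open>H \<cong> A \<times> B\<close> with \<open>A\<close> and \<open>B\<close>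
  nontrivial, one component of \<open>x\<^sup>m\<close>, say the \<open>B\<close>-component, has infinite order. Some \<open>e \<noteq> 1\<close> in \<open>A\<close>
  commutes with a power of the \<open>A\<close>-component, so \<open>(e, 1)\<close> commutes with a power of \<open>x\<^sup>m\<close> and one
  of its powers is a nonzero power of \<open>x\<^sup>m\<close>; projecting to \<open>B\<close> contradicts the infinite order of the
  \<open>B\<close>-component.
  The argument works for \<open>k \<ge> 3\<close> and only uses that the factors are nontrivial.\<close>

section \<open>Traces over the Coxeter diagram of type A\<close>

definition dependent_gens :: "nat \<Rightarrow> nat \<Rightarrow> bool" where
  "dependent_gens a b \<longleftrightarrow> a \<le> Suc b \<and> b \<le> Suc a"

lemma dependent_gens_sym: "dependent_gens a b = dependent_gens b a"
  by (auto simp: dependent_gens_def)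

lemma dependent_gens_refl [simp]: "dependent_gens a a"
  by (simp add: dependent_gens_def)

lemma far_apart_iff_not_dependent_gens: "2 \<le> \<bar>int i - int j\<bar> \<longleftrightarrow> \<not> dependent_gens i j"
  by (auto simp: dependent_gens_def)

definition proj_pair :: "nat \<Rightarrow> nat \<Rightarrow> nat list \<Rightarrow> nat list" where
  "proj_pair a b w = filter (\<lambda>x. x = a \<or> x = b) w"

text \<open>Equality in the free partially commutative monoid in which \<open>a\<close> and \<open>b\<close> commute unless
  \<open>dependent_gens a b\<close>. We take the projection lemma of trace theory as the definition;
  \<open>trace_eq_swap\<close> and \<open>trace_eq_imp_fb_eq\<close> recover the description by commutation moves.\<close>
definition trace_eq :: "nat list \<Rightarrow> nat list \<Rightarrow> bool" where
  "trace_eq u v \<longleftrightarrow> (\<forall>a b. dependent_gens a b \<longrightarrow> proj_pair a b u = proj_pair a b v)"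

lemma trace_eq_refl [simp]: "trace_eq u u"
  by (simp add: trace_eq_def)

lemma trace_eq_sym: "trace_eq u v \<Longrightarrow> trace_eq v u"
  by (simp add: trace_eq_def)

lemma trace_eq_trans: "trace_eq u v \<Longrightarrow> trace_eq v w \<Longrightarrow> trace_eq u w"
  by (simp add: trace_eq_def)

lemma trace_eq_append: "trace_eq u u' \<Longrightarrow> trace_eq v v' \<Longrightarrow> trace_eq (u @ v) (u' @ v')"
  by (simp add: trace_eq_def proj_pair_def)

lemma trace_eq_Cons: "trace_eq u v \<Longrightarrow> trace_eq (a # u) (a # v)"
  using trace_eq_append[of "[a]" "[a]" u v] by simp

lemma trace_eq_Cons_cancel: "trace_eq (a # u) (a # v) \<Longrightarrow> trace_eq u v"
  by (auto simp: trace_eq_def proj_pair_def split: if_splits)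

lemma trace_eq_rev: "trace_eq u v \<Longrightarrow> trace_eq (rev u) (rev v)"
  by (auto simp: trace_eq_def proj_pair_def rev_filter[symmetric])

lemma trace_eq_move_front:
  assumes "\<forall>c\<in>set v1. \<not> dependent_gens a c"
  shows "trace_eq (v1 @ a # v2) (a # v1 @ v2)"
  unfolding trace_eq_def proj_pair_def
proof (intro allI impI)
  fix c d assume cd: "dependent_gens c d"
  show "filter (\<lambda>x. x = c \<or> x = d) (v1 @ a # v2) = filter (\<lambda>x. x = c \<or> x = d) (a # v1 @ v2)"
  proof (cases "a = c \<or> a = d")
    case True
    then have "filter (\<lambda>x. x = c \<or> x = d) v1 = []"
      using assms cd by (auto simp: filter_empty_conv dependent_gens_sym)
    then show ?thesis by simp
  qed simp
qed

lemma trace_eq_swap: "\<not> dependent_gens a b \<Longrightarrow> trace_eq (x @ a # b # y) (x @ b # a # y)"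
  using trace_eq_move_front[of "[b]" a y]
  by (intro trace_eq_append[OF trace_eq_refl]) (simp add: dependent_gens_sym trace_eq_sym)

lemma trace_eq_Cons_split:
  assumes "trace_eq v (a # u)"
  shows "\<exists>v1 v2. v = v1 @ a # v2 \<and> a \<notin> set v1 \<and> (\<forall>c\<in>set v1. \<not> dependent_gens a c) \<and>
    trace_eq (v1 @ v2) u"
proof -
  have "proj_pair a a v = proj_pair a a (a # u)" using assms by (simp add: trace_eq_def)
  then have "a \<in> set v" by (auto simp: proj_pair_def filter_eq_Cons_iff)
  then obtain v1 v2 where v: "v = v1 @ a # v2" and na: "a \<notin> set v1"
    by (meson split_list_first)
  have indep: "\<forall>c\<in>set v1. \<not> dependent_gens a c"
  proof (intro ballI notI)
    fix c assume c: "c \<in> set v1" and d: "dependent_gens a c"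
    obtain w1 w2 where w: "v1 = w1 @ c # w2" "c \<notin> set w1" using c by (meson split_list_first)
    have "proj_pair a c v = proj_pair a c (a # u)" using assms d by (simp add: trace_eq_def)
    moreover have "filter (\<lambda>x. x = a \<or> x = c) w1 = []" using w na by (auto simp: filter_empty_conv)
    ultimately show False using v w na c by (auto simp: proj_pair_def)
  qed
  have "trace_eq v (a # v1 @ v2)" using v trace_eq_move_front[OF indep] by simp
  then have "trace_eq (a # v1 @ v2) (a # u)" using assms trace_eq_sym trace_eq_trans by blast
  then have "trace_eq (v1 @ v2) u" by (rule trace_eq_Cons_cancel)
  then show ?thesis using v na indep by blast
qed

lemma trace_eq_length: "trace_eq u v \<Longrightarrow> length u = length v"
proof (induction u arbitrary: v)
  case Nil
  show ?case
  proof (cases v)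
    case (Cons b w)
    have "proj_pair b b [] = proj_pair b b v" using Nil by (simp add: trace_eq_def)
    then show ?thesis using Cons by (simp add: proj_pair_def)
  qed simp
next
  case (Cons a u)
  from trace_eq_Cons_split[OF trace_eq_sym[OF Cons.prems]] obtain v1 v2 where
    "v = v1 @ a # v2" "trace_eq (v1 @ v2) u" by blast
  with Cons.IH[of "v1 @ v2"] trace_eq_sym show ?case by fastforce
qed

lemma trace_eq_set: "trace_eq u v \<Longrightarrow> set u = set v"
proof -
  assume t: "trace_eq u v"
  have "x \<in> set u \<longleftrightarrow> x \<in> set v" for x
  proof -
    have "proj_pair x x u = proj_pair x x v" using t by (simp add: trace_eq_def)
    then show ?thesis by (metis (mono_tags) filter_empty_conv proj_pair_def)
  qed
  then show ?thesis by blast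
qed


section \<open>Reduced words and the action on them\<close>

definition reducible :: "nat list \<Rightarrow> bool" where
  "reducible w \<longleftrightarrow> (\<exists>x a y. trace_eq w (x @ a # a # y))"

abbreviation reduced :: "nat list \<Rightarrow> bool" where "reduced w \<equiv> \<not> reducible w"

lemma reducible_trace_eq: "trace_eq u v \<Longrightarrow> reducible u = reducible v"
  unfolding reducible_def by (meson trace_eq_sym trace_eq_trans)

lemma reducible_appendI1: "reducible x \<Longrightarrow> reducible (x @ y)"
  unfolding reducible_def by (metis append.assoc append_Cons trace_eq_append trace_eq_refl)

lemma reducible_appendI2: "reducible y \<Longrightarrow> reducible (x @ y)"
  unfolding reducible_def by (metis append.assoc trace_eq_append trace_eq_refl)

lemma reduced_appendD: "reduced (x @ y) \<Longrightarrow> reduced x \<and> reduced y"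
  using reducible_appendI1 reducible_appendI2 by blast

lemma reducible_rev: "reducible (rev w) = reducible w"
proof -
  have "reducible w \<Longrightarrow> reducible (rev w)" for w
    unfolding reducible_def
    by (metis append.assoc append_Cons append_Nil rev.simps(2) rev_append trace_eq_rev)
  from this[of w] this[of "rev w"] show ?thesis by auto
qed

lemma reduced_Nil: "reduced []"
  unfolding reducible_def using trace_eq_length by fastforce

lemma append_eq_append_Cons_cases:
  assumes "A @ C = v1 @ d # v2"
  shows "(\<exists>A2. A = v1 @ d # A2 \<and> v2 = A2 @ C) \<or> (\<exists>C1. v1 = A @ C1 \<and> C = C1 @ d # v2)"
proof -
  from assms obtain us where "A = v1 @ us \<and> us @ C = d # v2 \<or> A @ us = v1 \<and> C = us @ d # v2"
    unfolding append_eq_append_conv2 by blast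
  then show ?thesis
  proof
    assume h: "A = v1 @ us \<and> us @ C = d # v2"
    show ?thesis
    proof (cases us)
      case Nil then show ?thesis using h by auto
    next
      case (Cons x us') then show ?thesis using h by auto
    qed
  qed blast
qed

lemma reduced_Cons:
  assumes "reduced r" "\<nexists>t. trace_eq r (a # t)"
  shows "reduced (a # r)"
proof
  assume "reducible (a # r)"
  then obtain x b y where t: "trace_eq (x @ b # b # y) (a # r)"
    unfolding reducible_def using trace_eq_sym by blast
  from trace_eq_Cons_split[OF t] obtain v1 v2 where s: "x @ b # b # y = v1 @ a # v2" "a \<notin> set v1"
    "\<forall>c\<in>set v1. \<not> dependent_gens a c" "trace_eq (v1 @ v2) r"
    by blast
  have irr: "\<not> reducible (v1 @ v2)" using assms(1) reducible_trace_eq[OF s(4)] by simp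
  from append_eq_append_Cons_cases[OF s(1)] show False
  proof (elim disjE exE conjE)
    fix A2 assume "v2 = A2 @ b # b # y"
    then have "v1 @ v2 = (v1 @ A2) @ b # b # y" by simp
    then show False using irr unfolding reducible_def by (metis trace_eq_refl)
  next
    fix C1 assume C1: "v1 = x @ C1" "b # b # y = C1 @ a # v2"
    consider "C1 = []" | "C1 = [b]" | C3 where "C1 = b # b # C3"
      using C1(2) by (cases C1; cases "tl C1") auto
    then show False
    proof cases
      case 1
      then have "a = b" "v2 = b # y" using C1 by auto
      then have "trace_eq r (a # x @ y)"
        using trace_eq_move_front[OF s(3)] s(4) C1 1
        by (metis append_Nil2 trace_eq_sym trace_eq_trans)
      then show False using assms(2) by blast
    next
      case 2
      then show False using C1 s(2) by auto
    next
      case 3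
      then have "v1 @ v2 = x @ b # b # (C3 @ v2)" using C1 by auto
      then show False using irr unfolding reducible_def by (metis trace_eq_refl)
    qed
  qed
qed

lemma reduced_snoc:
  assumes "reduced u" "\<nexists>z. trace_eq u (z @ [a])"
  shows "reduced (u @ [a])"
proof -
  have "\<nexists>t. trace_eq (rev u) (a # t)"
  proof
    assume "\<exists>t. trace_eq (rev u) (a # t)"
    then obtain t where "trace_eq (rev u) (a # t)" by blast
    then have "trace_eq u (rev t @ [a])" using trace_eq_rev by fastforce
    then show False using assms(2) by blast
  qed
  then have "reduced (a # rev u)" using assms(1) reducible_rev by (intro reduced_Cons) simp_all
  then show ?thesis using reducible_rev[of "u @ [a]"] by simp
qed

text \<open>The action of a generator on reduced words: cancel a left factor \<open>a\<close> if there is one,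
  otherwise prepend \<open>a\<close>. It is well defined on trace classes only, hence the choice.\<close>

definition act_gen :: "nat \<Rightarrow> nat list \<Rightarrow> nat list" where
  "act_gen a r = (if \<exists>t. trace_eq r (a # t) then (SOME t. trace_eq r (a # t)) else a # r)"

lemma act_gen_cancel: "trace_eq r (a # t) \<Longrightarrow> trace_eq (act_gen a r) t"
proof -
  assume h: "trace_eq r (a # t)"
  then have "trace_eq r (a # (SOME t. trace_eq r (a # t)))" by (rule someI)
  then have "trace_eq (a # (SOME t. trace_eq r (a # t))) (a # t)" using h trace_eq_sym trace_eq_trans by blast
  then show ?thesis using h unfolding act_gen_def by (auto dest: trace_eq_Cons_cancel)
qed

lemma act_gen_prepend: "\<not> (\<exists>t. trace_eq r (a # t)) \<Longrightarrow> act_gen a r = a # r"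
  by (simp add: act_gen_def)

lemma reduced_act_gen: "reduced r \<Longrightarrow> reduced (act_gen a r)"
proof (cases "\<exists>t. trace_eq r (a # t)")
  case True
  assume r: "reduced r"
  then obtain t where t: "trace_eq r (a # t)" using True by blast
  then have "reduced (a # t)" using r reducible_trace_eq by blast
  then have "reduced t" using reduced_appendD[of "[a]" t] by simp
  then show ?thesis using act_gen_cancel[OF t] reducible_trace_eq by blast
next
  case False
  assume "reduced r"
  then show ?thesis using reduced_Cons[OF _ False] act_gen_prepend[OF False] by simp
qed

lemma act_gen_trace_eq: "trace_eq r s \<Longrightarrow> trace_eq (act_gen a r) (act_gen a s)"
proof (cases "\<exists>t. trace_eq r (a # t)")
  case True
  assume rs: "trace_eq r s"
  then obtain t where t: "trace_eq r (a # t)" using True by blast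
  then have t2: "trace_eq s (a # t)" using rs trace_eq_sym trace_eq_trans by blast
  show ?thesis using act_gen_cancel[OF t] act_gen_cancel[OF t2] trace_eq_sym trace_eq_trans by blast
next
  case False
  assume rs: "trace_eq r s"
  then have F2: "\<not> (\<exists>t. trace_eq s (a # t))" using False trace_eq_trans by blast
  show ?thesis using act_gen_prepend[OF False] act_gen_prepend[OF F2] trace_eq_Cons[OF rs] by simp
qed

lemma act_gen_involutive: "reduced r \<Longrightarrow> trace_eq (act_gen a (act_gen a r)) r"
proof (cases "\<exists>t. trace_eq r (a # t)")
  case True
  assume r: "reduced r"
  then obtain t where t: "trace_eq r (a # t)" using True by blast
  have c: "trace_eq (act_gen a r) t" by (rule act_gen_cancel[OF t])
  have "\<not> (\<exists>t'. trace_eq (act_gen a r) (a # t'))"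
  proof
    assume "\<exists>t'. trace_eq (act_gen a r) (a # t')"
    then obtain t' where "trace_eq (act_gen a r) (a # t')" by blast
    then have "trace_eq t (a # t')" using c trace_eq_sym trace_eq_trans by blast
    then have "trace_eq r (a # a # t')" using t trace_eq_Cons trace_eq_trans by blast
    then have "reducible r" unfolding reducible_def by (metis append_Nil)
    then show False using r by simp
  qed
  then have "act_gen a (act_gen a r) = a # act_gen a r" by (rule act_gen_prepend)
  then show ?thesis using trace_eq_Cons[OF c] t trace_eq_sym trace_eq_trans by metis
next
  case False
  then have "act_gen a r = a # r" by (rule act_gen_prepend)
  then show ?thesis using act_gen_cancel[of "a # r" a r] by simp
qed

lemma no_left_factor_Cons:
  assumes "\<not> (\<exists>t. trace_eq r (a # t))" "a \<noteq> b"
  shows "\<not> (\<exists>t. trace_eq (b # r) (a # t))"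
proof
  assume "\<exists>t. trace_eq (b # r) (a # t)"
  then obtain t where "trace_eq (b # r) (a # t)" by blast
  from trace_eq_Cons_split[OF this] obtain v1 v2 where
    s: "b # r = v1 @ a # v2" "\<forall>c\<in>set v1. \<not> dependent_gens a c" by blast
  then obtain v1' where "v1 = b # v1'" using assms(2) by (cases v1) auto
  then have "r = v1' @ a # v2" "\<forall>c\<in>set v1'. \<not> dependent_gens a c" using s by auto
  then have "trace_eq r (a # v1' @ v2)" using trace_eq_move_front by simp
  then show False using assms(1) by blast
qed

lemma act_gen_comm_one_left_factor:
  assumes ab: "\<not> dependent_gens a b" and ra: "trace_eq r (a # ra)" and nb: "\<not> (\<exists>t. trace_eq r (b # t))"
  shows "trace_eq (act_gen a (act_gen b r)) (act_gen b (act_gen a r))"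
proof -
  have swap: "trace_eq (a # b # w) (b # a # w)" for w using trace_eq_swap[OF ab, of "[]"] by simp
  have e1: "act_gen b r = b # r" using nb act_gen_prepend by blast
  have "trace_eq (b # r) (a # b # ra)" using trace_eq_Cons[OF ra] swap trace_eq_sym trace_eq_trans by blast
  then have L: "trace_eq (act_gen a (act_gen b r)) (b # ra)" using e1 act_gen_cancel by simp
  have c: "trace_eq (act_gen a r) ra" by (rule act_gen_cancel[OF ra])
  have "\<not> (\<exists>z. trace_eq (act_gen a r) (b # z))"
  proof
    assume "\<exists>z. trace_eq (act_gen a r) (b # z)"
    then obtain z where "trace_eq (act_gen a r) (b # z)" by blast
    then have "trace_eq ra (b # z)" using c trace_eq_sym trace_eq_trans by blast
    then have "trace_eq r (a # b # z)" using ra trace_eq_Cons trace_eq_trans by blast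
    then have "trace_eq r (b # a # z)" using swap trace_eq_trans by blast
    then show False using nb by blast
  qed
  then have "act_gen b (act_gen a r) = b # act_gen a r" by (rule act_gen_prepend)
  then show ?thesis using L trace_eq_Cons[OF c] trace_eq_sym trace_eq_trans by metis
qed

lemma act_gen_comm:
  assumes ab: "\<not> dependent_gens a b"
  shows "trace_eq (act_gen a (act_gen b r)) (act_gen b (act_gen a r))"
proof -
  have anb: "a \<noteq> b" using ab by auto
  consider (both) "\<exists>t. trace_eq r (a # t)" "\<exists>t. trace_eq r (b # t)"
    | (onlya) "\<exists>t. trace_eq r (a # t)" "\<not> (\<exists>t. trace_eq r (b # t))"
    | (onlyb) "\<not> (\<exists>t. trace_eq r (a # t))" "\<exists>t. trace_eq r (b # t)"
    | (neither) "\<not> (\<exists>t. trace_eq r (a # t))" "\<not> (\<exists>t. trace_eq r (b # t))" by blast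
  then show ?thesis
  proof cases
    case both
    then obtain ra rb where ra: "trace_eq r (a # ra)" and rb: "trace_eq r (b # rb)" by blast
    then have "trace_eq (b # rb) (a # ra)" using trace_eq_sym trace_eq_trans by blast
    from trace_eq_Cons_split[OF this] obtain v1 v2 where
      s: "b # rb = v1 @ a # v2" "\<forall>c\<in>set v1. \<not> dependent_gens a c" "trace_eq (v1 @ v2) ra" by blast
    then obtain v1' where v1: "v1 = b # v1'" using anb by (cases v1) auto
    define t where "t = v1' @ v2"
    have rbt: "trace_eq rb (a # t)" using s v1 trace_eq_move_front[of v1' a v2] by (simp add: t_def)
    have rat: "trace_eq ra (b # t)" using s(3) v1 trace_eq_sym by (simp add: t_def)
    have 1: "trace_eq (act_gen b r) (a # t)" using act_gen_cancel[OF rb] rbt trace_eq_trans by blast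
    have 2: "trace_eq (act_gen a r) (b # t)" using act_gen_cancel[OF ra] rat trace_eq_trans by blast
    show ?thesis using act_gen_cancel[OF 1] act_gen_cancel[OF 2] trace_eq_sym trace_eq_trans by blast
  next
    case onlya
    then show ?thesis using act_gen_comm_one_left_factor[OF ab] by blast
  next
    case onlyb
    moreover have "\<not> dependent_gens b a" using ab dependent_gens_sym by blast
    ultimately show ?thesis using act_gen_comm_one_left_factor trace_eq_sym by blast
  next
    case neither
    have e1: "act_gen b r = b # r" "act_gen a r = a # r" using neither act_gen_prepend by blast+
    have "act_gen a (b # r) = a # b # r"
      using no_left_factor_Cons[OF neither(1) anb] act_gen_prepend by blast
    moreover have "act_gen b (a # r) = b # a # r"
      using no_left_factor_Cons[OF neither(2) anb[symmetric]] act_gen_prepend by blast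
    ultimately show ?thesis using e1 trace_eq_swap[OF ab, of "[]"] by simp
  qed
qed

definition act_word :: "nat list \<Rightarrow> nat list \<Rightarrow> nat list" where
  "act_word w r = foldr act_gen w r"

lemma act_word_simps[simp]: "act_word [] r = r" "act_word (a # w) r = act_gen a (act_word w r)"
  "act_word (u @ v) r = act_word u (act_word v r)"
  by (simp_all add: act_word_def)

lemma reduced_act_word: "reduced r \<Longrightarrow> reduced (act_word w r)"
proof (induction w)
  case (Cons a w)
  then show ?case using reduced_act_gen[of "act_word w r" a] by simp
qed simp

lemma act_word_trace_eq: "trace_eq r s \<Longrightarrow> trace_eq (act_word w r) (act_word w s)"
  by (induction w) (auto intro: act_gen_trace_eq)

lemma act_word_reduced_self: "reduced u \<Longrightarrow> trace_eq (act_word u []) u"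
proof (induction u)
  case Nil then show ?case by simp
next
  case (Cons a u)
  have ru: "reduced u" using Cons.prems reduced_appendD[of "[a]" u] by simp
  have nc: "\<not> (\<exists>t. trace_eq u (a # t))"
  proof
    assume "\<exists>t. trace_eq u (a # t)"
    then obtain t where "trace_eq u (a # t)" by blast
    then have "trace_eq (a # u) ([] @ a # a # t)" using trace_eq_Cons by simp
    then show False using Cons.prems unfolding reducible_def by blast
  qed
  have "trace_eq (act_gen a (act_word u [])) (act_gen a u)" using act_gen_trace_eq[OF Cons.IH[OF ru]] .
  then show ?case using act_gen_prepend[OF nc] by simp
qed


section \<open>The presentation of \<open>FB\<^sub>k\<close>\<close>

lemma fb_eq_refl[simp]: "fb_eq k u u"
  by (simp add: fb_eq_def)

lemma fb_eq_sym: "fb_eq k u v \<Longrightarrow> fb_eq k v u"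
proof -
  have s: "symp (sup (fb_step k) (fb_step k)\<inverse>\<inverse>)" by (auto simp: symp_def)
  show "fb_eq k u v \<Longrightarrow> fb_eq k v u" unfolding fb_eq_def
    using symp_rtranclp[OF s] by (auto simp: symp_def)
qed

lemma fb_eq_trans: "fb_eq k u v \<Longrightarrow> fb_eq k v w \<Longrightarrow> fb_eq k u w"
  unfolding fb_eq_def by (rule rtranclp_trans)

lemma fb_step_append_context: "fb_step k u v \<Longrightarrow> fb_step k (x @ u @ y) (x @ v @ y)"
proof (induction rule: fb_step.induct)
  case (cancel i xs ys)
  then show ?case using fb_step.cancel[of i k "x @ xs" "ys @ y"] by simp
next
  case (comm i j xs ys)
  then show ?case using fb_step.comm[of i k j "x @ xs" "ys @ y"] by simp
qed

lemma fb_eq_append_context: "fb_eq k u v \<Longrightarrow> fb_eq k (x @ u @ y) (x @ v @ y)"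
  unfolding fb_eq_def
proof (induction rule: rtranclp_induct)
  case base then show ?case by simp
next
  case (step b c)
  then have "(sup (fb_step k) (fb_step k)\<inverse>\<inverse>) (x @ b @ y) (x @ c @ y)"
    using fb_step_append_context by auto
  then show ?case using step.IH by (meson rtranclp.rtrancl_into_rtrancl)
qed

lemma fb_eq_append: "fb_eq k u u' \<Longrightarrow> fb_eq k v v' \<Longrightarrow> fb_eq k (u @ v) (u' @ v')"
  using fb_eq_append_context[of k u u' "[]" v] fb_eq_append_context[of k v v' u' "[]"] fb_eq_trans by fastforce

lemma fb_eq_stepI: "fb_step k u v \<Longrightarrow> fb_eq k u v"
  unfolding fb_eq_def by auto

lemma fb_eq_cancel: "i \<in> {1..<k} \<Longrightarrow> fb_eq k (x @ [i, i] @ y) (x @ y)"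
  by (rule fb_eq_stepI) (rule fb_step.cancel)

lemma fb_eq_swap:
  "i \<in> {1..<k} \<Longrightarrow> j \<in> {1..<k} \<Longrightarrow> \<not> dependent_gens i j \<Longrightarrow>
    fb_eq k (x @ [i, j] @ y) (x @ [j, i] @ y)"
  by (rule fb_eq_stepI) (rule fb_step.comm, auto simp: far_apart_iff_not_dependent_gens)

lemma fb_eq_move_front:
  "set v1 \<subseteq> {1..<k} \<Longrightarrow> a \<in> {1..<k} \<Longrightarrow> \<forall>c\<in>set v1. \<not> dependent_gens a c \<Longrightarrow>
    fb_eq k (v1 @ a # v2) (a # v1 @ v2)"
proof (induction v1 arbitrary: v2 rule: rev_induct)
  case Nil then show ?case by simp
next
  case (snoc c v1)
  have "fb_eq k (v1 @ [c, a] @ v2) (v1 @ [a, c] @ v2)"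
    using snoc.prems dependent_gens_sym by (intro fb_eq_swap) auto
  moreover have "fb_eq k (v1 @ a # (c # v2)) (a # v1 @ (c # v2))"
    using snoc.IH[of "c # v2"] snoc.prems by auto
  ultimately show ?case using fb_eq_trans by fastforce
qed

lemma trace_eq_imp_fb_eq: "set u \<subseteq> {1..<k} \<Longrightarrow> trace_eq u v \<Longrightarrow> fb_eq k u v"
proof (induction u arbitrary: v)
  case Nil
  then have "v = []" using trace_eq_length by fastforce
  then show ?case by simp
next
  case (Cons a u)
  from trace_eq_Cons_split[OF trace_eq_sym[OF Cons.prems(2)]] obtain v1 v2 where
    s: "v = v1 @ a # v2" "\<forall>c\<in>set v1. \<not> dependent_gens a c" "trace_eq (v1 @ v2) u" by blast
  have sv: "set v = set (a # u)" using trace_eq_set[OF Cons.prems(2)] by simp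
  have "fb_eq k u (v1 @ v2)" using Cons.IH[of "v1 @ v2"] Cons.prems(1) s(3) trace_eq_sym by auto
  then have "fb_eq k (a # u) (a # v1 @ v2)" using fb_eq_append_context[of k _ _ "[a]" "[]"] by simp
  moreover have "fb_eq k (v1 @ a # v2) (a # v1 @ v2)"
  proof (rule fb_eq_move_front)
    show "set v1 \<subseteq> {1..<k}" "a \<in> {1..<k}" using sv Cons.prems(1) s(1) by auto
  qed (use s in auto)
  ultimately show ?case using s(1) fb_eq_trans fb_eq_sym by metis
qed

lemma fb_eq_rev_cancel: "set w \<subseteq> {1..<k} \<Longrightarrow> fb_eq k (x @ rev w @ w @ y) (x @ y)"
proof (induction w arbitrary: y)
  case Nil then show ?case by simp
next
  case (Cons a w)
  have "fb_eq k ((x @ rev w) @ [a, a] @ (w @ y)) ((x @ rev w) @ (w @ y))"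
    using Cons.prems by (intro fb_eq_cancel) auto
  then have "fb_eq k (x @ rev (a # w) @ (a # w) @ y) (x @ rev w @ w @ y)" by simp
  then show ?case using Cons fb_eq_trans by auto
qed

lemma fb_eq_rev_cancel': "set w \<subseteq> {1..<k} \<Longrightarrow> fb_eq k (x @ w @ rev w @ y) (x @ y)"
  using fb_eq_rev_cancel[of "rev w" k x y] by simp

lemma fb_step_act_word: "fb_step k u v \<Longrightarrow> reduced r \<Longrightarrow> trace_eq (act_word u r) (act_word v r)"
proof (induction rule: fb_step.induct)
  case (cancel i xs ys)
  have "trace_eq (act_gen i (act_gen i (act_word ys r))) (act_word ys r)"
    using act_gen_involutive reduced_act_word[OF cancel.prems] by blast
  then show ?case using act_word_trace_eq by simp
next
  case (comm i j xs ys)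
  have "\<not> dependent_gens i j" using comm.hyps far_apart_iff_not_dependent_gens by blast
  then have "trace_eq (act_gen i (act_gen j (act_word ys r))) (act_gen j (act_gen i (act_word ys r)))" by (rule act_gen_comm)
  then show ?case using act_word_trace_eq by simp
qed

lemma fb_eq_act_word: "fb_eq k u v \<Longrightarrow> trace_eq (act_word u []) (act_word v [])"
  unfolding fb_eq_def
proof (induction rule: rtranclp_induct)
  case base then show ?case by simp
next
  case (step b c)
  then have "trace_eq (act_word b []) (act_word c [])"
    using fb_step_act_word[OF _ reduced_Nil] trace_eq_sym by auto
  then show ?case using step.IH trace_eq_trans by blast
qed

text \<open>The word problem: \<open>FB\<^sub>k\<close> acts on trace classes of reduced words through \<open>act_gen\<close>, and a
  reduced word applied to the empty word returns itself.\<close>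
lemma reduced_fb_eq_imp_trace_eq: "reduced u \<Longrightarrow> reduced v \<Longrightarrow> fb_eq k u v \<Longrightarrow> trace_eq u v"
  using fb_eq_act_word act_word_reduced_self trace_eq_sym trace_eq_trans by metis

lemma exists_reduced_fb_eq:
  "set w \<subseteq> {1..<k} \<Longrightarrow> \<exists>w'. reduced w' \<and> set w' \<subseteq> {1..<k} \<and> fb_eq k w w'"
proof (induction "length w" arbitrary: w rule: less_induct)
  case less
  show ?case
  proof (cases "reducible w")
    case False
    then show ?thesis using less.prems by (intro exI[of _ w]) simp
  next
    case True
    then obtain x a y where t: "trace_eq w (x @ a # a # y)" unfolding reducible_def by blast
    have sw: "set w = set (x @ a # a # y)" by (rule trace_eq_set[OF t])
    have "fb_eq k w (x @ [a, a] @ y)" using trace_eq_imp_fb_eq[OF less.prems t] by simp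
    moreover have "fb_eq k (x @ [a, a] @ y) (x @ y)" using sw less.prems by (intro fb_eq_cancel) auto
    ultimately have e: "fb_eq k w (x @ y)" by (rule fb_eq_trans)
    have "length (x @ y) < length w" using trace_eq_length[OF t] by simp
    moreover have "set (x @ y) \<subseteq> {1..<k}" using sw less.prems by auto
    ultimately obtain w' where "reduced w'" "set w' \<subseteq> {1..<k}" "fb_eq k (x @ y) w'"
      using less.hyps by blast
    then show ?thesis using e fb_eq_trans by blast
  qed
qed

lemma fb_class_eq_iff: "fb_class k u = fb_class k v \<longleftrightarrow> fb_eq k u v"
proof
  assume "fb_class k u = fb_class k v"
  then have "v \<in> fb_class k u" by (simp add: fb_class_def)
  then show "fb_eq k u v" by (simp add: fb_class_def)
next
  assume e: "fb_eq k u v"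
  show "fb_class k u = fb_class k v"
    unfolding fb_class_def using e fb_eq_sym fb_eq_trans by blast
qed

lemma fb_mult_class: "fb_mult k (fb_class k u) (fb_class k v) = fb_class k (u @ v)"
proof (rule Set.set_eqI)
  fix w
  show "w \<in> fb_mult k (fb_class k u) (fb_class k v) \<longleftrightarrow> w \<in> fb_class k (u @ v)"
  proof
    assume "w \<in> fb_mult k (fb_class k u) (fb_class k v)"
    then obtain p q where "fb_eq k u p" "fb_eq k v q" "fb_eq k (p @ q) w"
      unfolding fb_mult_def fb_class_def by blast
    then have "fb_eq k (u @ v) w" using fb_eq_append fb_eq_trans by blast
    then show "w \<in> fb_class k (u @ v)" by (simp add: fb_class_def)
  next
    assume "w \<in> fb_class k (u @ v)"
    then have "fb_eq k (u @ v) w" by (simp add: fb_class_def)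
    moreover have "u \<in> fb_class k u" "v \<in> fb_class k v" by (simp_all add: fb_class_def)
    ultimately show "w \<in> fb_mult k (fb_class k u) (fb_class k v)"
      unfolding fb_mult_def by blast
  qed
qed

lemma FB_carrier: "carrier (FB k) = {fb_class k w | w. set w \<subseteq> {1..<k}}"
  by (simp add: FB_def)

lemma FB_mult: "x \<otimes>\<^bsub>FB k\<^esub> y = fb_mult k x y"
  by (simp add: FB_def)

lemma FB_one: "\<one>\<^bsub>FB k\<^esub> = fb_class k []"
  by (simp add: FB_def)

lemma FB_classI: "set w \<subseteq> {1..<k} \<Longrightarrow> fb_class k w \<in> carrier (FB k)"
  by (auto simp: FB_carrier)

lemma group_FB: "group (FB k)"
proof (rule groupI)
  fix x y assume "x \<in> carrier (FB k)" "y \<in> carrier (FB k)"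
  then obtain w w' where "x = fb_class k w" "set w \<subseteq> {1..<k}" "y = fb_class k w'" "set w' \<subseteq> {1..<k}"
    by (auto simp: FB_carrier)
  then show "x \<otimes>\<^bsub>FB k\<^esub> y \<in> carrier (FB k)"
    by (simp add: FB_mult fb_mult_class FB_classI)
next
  show "\<one>\<^bsub>FB k\<^esub> \<in> carrier (FB k)" by (auto simp: FB_carrier FB_one)
next
  fix x y z assume "x \<in> carrier (FB k)" "y \<in> carrier (FB k)" "z \<in> carrier (FB k)"
  then show "x \<otimes>\<^bsub>FB k\<^esub> y \<otimes>\<^bsub>FB k\<^esub> z = x \<otimes>\<^bsub>FB k\<^esub> (y \<otimes>\<^bsub>FB k\<^esub> z)"
    by (auto simp: FB_carrier FB_mult fb_mult_class)
next
  fix x assume "x \<in> carrier (FB k)"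
  then show "\<one>\<^bsub>FB k\<^esub> \<otimes>\<^bsub>FB k\<^esub> x = x"
    by (auto simp: FB_carrier FB_mult FB_one fb_mult_class)
next
  fix x assume "x \<in> carrier (FB k)"
  then obtain w where w: "x = fb_class k w" "set w \<subseteq> {1..<k}" by (auto simp: FB_carrier)
  have "fb_class k (rev w) \<otimes>\<^bsub>FB k\<^esub> x = \<one>\<^bsub>FB k\<^esub>"
    using w fb_eq_rev_cancel[of w k "[]" "[]"] by (simp add: FB_mult FB_one fb_mult_class fb_class_eq_iff)
  moreover have "fb_class k (rev w) \<in> carrier (FB k)" using w by (intro FB_classI) auto
  ultimately show "\<exists>y\<in>carrier (FB k). y \<otimes>\<^bsub>FB k\<^esub> x = \<one>\<^bsub>FB k\<^esub>" by blast
qed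

lemma FB_pow: "fb_class k u [^]\<^bsub>FB k\<^esub> (n::nat) = fb_class k (concat (replicate n u))"
proof (induction n)
  case (Suc n)
  have "concat (replicate n u) @ u = concat (replicate (Suc n) u)"
    by (simp add: replicate_append_same[symmetric])
  then show ?case using Suc by (simp add: FB_mult fb_mult_class)
qed (simp add: FB_one)

lemma FB_inv: "set u \<subseteq> {1..<k} \<Longrightarrow> inv\<^bsub>FB k\<^esub> (fb_class k u) = fb_class k (rev u)"
proof -
  assume su: "set u \<subseteq> {1..<k}"
  have "fb_class k (rev u) \<otimes>\<^bsub>FB k\<^esub> fb_class k u = \<one>\<^bsub>FB k\<^esub>"
    using fb_eq_rev_cancel[OF su, of "[]" "[]"] by (simp add: FB_mult FB_one fb_mult_class fb_class_eq_iff)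
  then show ?thesis
    using group.inv_equality[OF group_FB] FB_classI su by (metis set_rev)
qed

lemma FB_carrier_reduced:
  assumes "h \<in> carrier (FB k)"
  shows "\<exists>u. reduced u \<and> set u \<subseteq> {1..<k} \<and> h = fb_class k u"
proof -
  obtain w where "h = fb_class k w" "set w \<subseteq> {1..<k}" using assms by (auto simp: FB_carrier)
  then show ?thesis using exists_reduced_fb_eq fb_class_eq_iff by metis
qed

section \<open>Walks in the Coxeter diagram\<close>

abbreviation walk :: "nat list \<Rightarrow> bool" where
  "walk \<equiv> successively (\<lambda>a b. dependent_gens a b \<and> a \<noteq> b)"

lemma walk_ConsD: "walk (a # w) \<Longrightarrow> walk w"
  by (cases w) auto

lemma walk_appendD: "walk (x @ y) \<Longrightarrow> walk y"
  by (induction x) (auto dest: walk_ConsD)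

lemma walk_rev: "walk (rev w) = walk w"
proof -
  have "(\<lambda>x y. dependent_gens y x \<and> y \<noteq> x) = (\<lambda>x y. dependent_gens x y \<and> x \<noteq> y)"
    by (auto simp: dependent_gens_def)
  then show ?thesis by (simp only: successively_rev)
qed

lemma successively_upt: "(\<And>j. P j (Suc j)) \<Longrightarrow> successively P [a..<b]"
proof (induction "b - a" arbitrary: a)
  case (Suc x)
  then have "[a..<b] = a # [Suc a..<b]" "successively P [Suc a..<b]" by (simp_all add: upt_conv_Cons)
  then show ?case using Suc.prems by (cases "Suc a < b") (auto simp: successively_Cons upt_conv_Cons)
qed simp

lemma walk_last_dependent: "walk (C1 @ d # v2) \<Longrightarrow> C1 \<noteq> [] \<Longrightarrow> dependent_gens (last C1) d"
proof (induction C1)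
  case (Cons a C1)
  then show ?case by (cases C1) (auto dest: walk_ConsD)
qed simp

lemma not_walk_square: "walk (x @ a # a # y) \<Longrightarrow> False"
  using walk_appendD[of x "a # a # y"] by simp

lemma walk_trace_eq_imp_eq: "walk w \<Longrightarrow> trace_eq w v \<Longrightarrow> w = v"
proof (induction w arbitrary: v)
  case Nil
  then show ?case using trace_eq_length by fastforce
next
  case (Cons a w)
  show ?case
  proof (cases v)
    case Nil
    then show ?thesis using trace_eq_length[OF Cons.prems(2)] by simp
  next
    case (Cons c v')
    from trace_eq_Cons_split[of "a # w" c v'] Cons.prems(2) Cons obtain w1 w2 where
      s: "a # w = w1 @ c # w2" "\<forall>x\<in>set w1. \<not> dependent_gens c x" "trace_eq (w1 @ w2) v'" by blast
    have "w1 = []"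
    proof (rule ccontr)
      assume "w1 \<noteq> []"
      then have "dependent_gens (last w1) c" using walk_last_dependent Cons.prems(1) s(1) by metis
      moreover have "last w1 \<in> set w1" using \<open>w1 \<noteq> []\<close> by simp
      ultimately show False using s(2) dependent_gens_sym by blast
    qed
    then have "a = c" "w = w2" using s(1) by auto
    then show ?thesis using Cons.IH[of v'] walk_ConsD[OF Cons.prems(1)] s(3) \<open>w1 = []\<close> Cons by simp
  qed
qed

lemma reduced_walk: "walk w \<Longrightarrow> reduced w"
  unfolding reducible_def using walk_trace_eq_imp_eq not_walk_square by metis

lemma walk_step_not_right_factor:
  assumes "dependent_gens a b" "a \<noteq> b"
  shows "\<not> (\<exists>z. trace_eq (u @ [a]) (z @ [b]))"
proof
  assume "\<exists>z. trace_eq (u @ [a]) (z @ [b])"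
  then obtain z where "trace_eq (u @ [a]) (z @ [b])" by blast
  then have "trace_eq (a # rev u) (b # rev z)" using trace_eq_rev by fastforce
  from trace_eq_Cons_split[OF this] obtain v1 v2 where
    s: "a # rev u = v1 @ b # v2" "\<forall>c\<in>set v1. \<not> dependent_gens b c" by blast
  then obtain v1' where "v1 = a # v1'" using assms(2) by (cases v1) auto
  then show False using s(2) assms(1) dependent_gens_sym by auto
qed

lemma reduced_append_walk:
  "reduced u \<Longrightarrow> walk (a # p) \<Longrightarrow> \<not> (\<exists>z. trace_eq u (z @ [a])) \<Longrightarrow> reduced (u @ a # p)"
proof (induction p arbitrary: u a)
  case Nil
  then show ?case using reduced_snoc by simp
next
  case (Cons b p)
  have r: "reduced (u @ [a])" using reduced_snoc Cons.prems by blast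
  have "dependent_gens a b" "a \<noteq> b" "walk (b # p)" using Cons.prems(2) by auto
  then have "\<not> (\<exists>z. trace_eq (u @ [a]) (z @ [b]))" using walk_step_not_right_factor by blast
  from Cons.IH[OF r \<open>walk (b # p)\<close> this] show ?case by simp
qed

lemma reduced_append_walk_cancel:
  "reduced u \<Longrightarrow> walk p \<Longrightarrow> \<exists>r u'. r \<le> length p \<and> r \<le> length u \<and>
      trace_eq u (u' @ rev (take r p)) \<and> reduced (u' @ drop r p)"
proof (induction p arbitrary: u)
  case Nil
  then show ?case by (intro exI[of _ 0] exI[of _ u]) simp
next
  case (Cons a p)
  show ?case
  proof (cases "\<exists>z. trace_eq u (z @ [a])")
    case True
    then obtain z where z: "trace_eq u (z @ [a])" by blast
    then have "reduced (z @ [a])" using Cons.prems(1) reducible_trace_eq by blast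
    then have rz: "reduced z" using reduced_appendD by blast
    from Cons.IH[OF rz walk_ConsD[OF Cons.prems(2)]] obtain r u' where
      h: "r \<le> length p" "r \<le> length z" "trace_eq z (u' @ rev (take r p))" "reduced (u' @ drop r p)" by blast
    have lu: "length u = Suc (length z)" using trace_eq_length[OF z] by simp
    have "trace_eq u (u' @ rev (take r p) @ [a])"
      using trace_eq_trans[OF z trace_eq_append[OF h(3) trace_eq_refl[of "[a]"]]] by simp
    then show ?thesis using h lu
      by (intro exI[of _ "Suc r"] exI[of _ u']) simp
  next
    case False
    then show ?thesis using reduced_append_walk[OF Cons.prems(1) Cons.prems(2) False]
      by (intro exI[of _ 0] exI[of _ u]) simp
  qed
qed

text \<open>A letter \<open>d\<close> at the front of \<open>A @ C\<close> with \<open>C\<close> a walk comes either from \<open>A\<close> or is the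
  first letter of \<open>C\<close>: a later letter of \<open>C\<close> is blocked by its predecessor, which depends on it.\<close>
lemma trace_eq_append_walk_Cons_cases:
  assumes e: "trace_eq (A @ C) (d # B)" and C: "walk C"
  shows "(\<exists>A1 A2. A = A1 @ d # A2 \<and> (\<forall>c\<in>set A1. \<not> dependent_gens d c) \<and> trace_eq (A1 @ A2 @ C) B) \<or>
    (\<exists>C'. C = d # C' \<and> (\<forall>c\<in>set A. \<not> dependent_gens d c) \<and> trace_eq (A @ C') B)"
proof -
  from trace_eq_Cons_split[OF e] obtain v1 v2 where
    s: "A @ C = v1 @ d # v2" "\<forall>c\<in>set v1. \<not> dependent_gens d c" "trace_eq (v1 @ v2) B" by blast
  from append_eq_append_Cons_cases[OF s(1)] show ?thesis
  proof (elim disjE exE conjE)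
    fix A2 assume "A = v1 @ d # A2" "v2 = A2 @ C"
    then show ?thesis using s(2,3) by auto
  next
    fix C1 assume C1: "v1 = A @ C1" "C = C1 @ d # v2"
    have "C1 = []"
    proof (rule ccontr)
      assume "C1 \<noteq> []"
      then have "dependent_gens (last C1) d" using walk_last_dependent C C1(2) by metis
      moreover have "last C1 \<in> set v1" using \<open>C1 \<noteq> []\<close> C1(1) by simp
      ultimately show False using s(2) dependent_gens_sym by blast
    qed
    then show ?thesis using C1 s(2,3) by auto
  qed
qed

lemma trace_eq_append_walk_absorb:
  "trace_eq (A @ C) (D @ B) \<Longrightarrow> walk C \<Longrightarrow> \<exists>i A'. i \<le> length D \<and> trace_eq A (take i D @ A') \<and>
     trace_eq (A' @ C) (drop i D @ B) \<and>
     (i = length D \<or> (C \<noteq> [] \<and> D ! i = hd C \<and> (\<forall>c\<in>set A'. \<not> dependent_gens (hd C) c)))"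
proof (induction D arbitrary: A)
  case Nil
  then show ?case by (intro exI[of _ 0] exI[of _ A]) simp
next
  case (Cons d D)
  have "trace_eq (A @ C) (d # D @ B)" using Cons.prems(1) by simp
  from trace_eq_append_walk_Cons_cases[OF this Cons.prems(2)] show ?case
  proof (elim disjE exE conjE)
    fix A1 A2 assume A: "A = A1 @ d # A2" "\<forall>c\<in>set A1. \<not> dependent_gens d c"
      and t: "trace_eq (A1 @ A2 @ C) (D @ B)"
    have tA: "trace_eq A (d # A1 @ A2)" using A trace_eq_move_front by simp
    from Cons.IH[of "A1 @ A2"] t Cons.prems(2) obtain i A' where
      h: "i \<le> length D" "trace_eq (A1 @ A2) (take i D @ A')" "trace_eq (A' @ C) (drop i D @ B)"
         "i = length D \<or> (C \<noteq> [] \<and> D ! i = hd C \<and> (\<forall>c\<in>set A'. \<not> dependent_gens (hd C) c))" by auto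
    have "trace_eq A (take (Suc i) (d # D) @ A')"
      using trace_eq_trans[OF tA trace_eq_Cons[OF h(2)]] by simp
    then show ?thesis using h by (intro exI[of _ "Suc i"] exI[of _ A']) auto
  next
    fix C' assume "C = d # C'" "\<forall>c\<in>set A. \<not> dependent_gens d c"
    then show ?thesis using Cons.prems(1) by (intro exI[of _ 0] exI[of _ A]) auto
  qed
qed

lemma trace_eq_walk_prefix:
  "trace_eq (A' @ C) (D @ B) \<Longrightarrow> walk C \<Longrightarrow> walk D \<Longrightarrow> length D \<le> length C \<Longrightarrow>
   (D \<noteq> [] \<longrightarrow> hd D = hd C \<and> (\<forall>c\<in>set A'. \<not> dependent_gens (hd C) c)) \<Longrightarrow>
   \<exists>C''. C = D @ C'' \<and> (\<forall>c\<in>set A'. \<forall>d\<in>set D. \<not> dependent_gens d c)"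
proof (induction D arbitrary: C)
  case Nil
  then show ?case by simp
next
  case (Cons d D)
  have hd1: "hd (d # D) = hd C" "\<forall>c\<in>set A'. \<not> dependent_gens (hd C) c" using Cons.prems(5) by auto
  obtain C' where C: "C = d # C'" using Cons.prems(4) hd1(1) by (cases C) auto
  have ind: "\<forall>c\<in>set A'. \<not> dependent_gens d c" using hd1(2) C by simp
  have "trace_eq (A' @ d # C') (d # A' @ C')" by (rule trace_eq_move_front[OF ind])
  moreover have "trace_eq (A' @ d # C') (d # D @ B)" using Cons.prems(1) C by simp
  ultimately have "trace_eq (d # A' @ C') (d # D @ B)" using trace_eq_sym trace_eq_trans by blast
  then have t: "trace_eq (A' @ C') (D @ B)" by (rule trace_eq_Cons_cancel)
  have cC': "walk C'" using Cons.prems(2) C walk_ConsD by simp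
  have cD: "walk D" using Cons.prems(3) walk_ConsD by simp
  have hyp: "D \<noteq> [] \<longrightarrow> hd D = hd C' \<and> (\<forall>c\<in>set A'. \<not> dependent_gens (hd C') c)"
  proof
    assume "D \<noteq> []"
    then obtain d' D' where D: "D = d' # D'" by (cases D) auto
    have "dependent_gens d d'" using Cons.prems(3) D by simp
    then have "d' \<notin> set A'" using ind by blast
    moreover have "trace_eq (A' @ C') (d' # D' @ B)" using t D by simp
    ultimately show "hd D = hd C' \<and> (\<forall>c\<in>set A'. \<not> dependent_gens (hd C') c)"
      using trace_eq_append_walk_Cons_cases[OF _ cC'] D by fastforce
  qed
  have "length D \<le> length C'" using Cons.prems(4) C by simp
  from Cons.IH[OF t cC' cD this hyp] obtain C'' where
    "C' = D @ C''" "\<forall>c\<in>set A'. \<forall>d\<in>set D. \<not> dependent_gens d c" by blast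
  then show ?case using C ind by (intro exI[of _ C'']) simp
qed

lemma trace_eq_append_walks:
  assumes e: "trace_eq (A @ C) (D @ B)" and C: "walk C" and D: "walk D"
    and len: "length D \<le> length C"
  shows "\<exists>i A' C''. i \<le> length D \<and> trace_eq A (take i D @ A') \<and> C = drop i D @ C'' \<and>
    (\<forall>c\<in>set A'. \<forall>d\<in>set (drop i D). \<not> dependent_gens d c)"
proof -
  from trace_eq_append_walk_absorb[OF e C] obtain i A' where
    h: "i \<le> length D" "trace_eq A (take i D @ A')" "trace_eq (A' @ C) (drop i D @ B)"
       "i = length D \<or> (C \<noteq> [] \<and> D ! i = hd C \<and> (\<forall>c\<in>set A'. \<not> dependent_gens (hd C) c))"
    by blast
  have "walk (drop i D)" using D walk_appendD[of "take i D" "drop i D"] by simp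
  moreover have "length (drop i D) \<le> length C" using len by simp
  moreover have "drop i D \<noteq> [] \<longrightarrow> hd (drop i D) = hd C \<and> (\<forall>c\<in>set A'. \<not> dependent_gens (hd C) c)"
    using h(1,4) by (auto simp: hd_drop_conv_nth)
  ultimately obtain C'' where "C = drop i D @ C''"
    "\<forall>c\<in>set A'. \<forall>d\<in>set (drop i D). \<not> dependent_gens d c"
    using trace_eq_walk_prefix[OF h(3) C] by blast
  then show ?thesis using h(1,2) by blast
qed

lemma walk_map_upt:
  assumes "\<And>j. dependent_gens (f j) (f (Suc j)) \<and> f j \<noteq> f (Suc j)"
  shows "walk (map f [a..<b])"
  unfolding successively_map using assms by (rule successively_upt)

section \<open>The zigzag walk\<close>

definition zigzag_phase :: "nat \<Rightarrow> nat \<Rightarrow> nat" where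
  "zigzag_phase n m = (if m < n then Suc m else 2 * n - 1 - m)"

text \<open>The sequence \<open>1, 2, \<dots>, n, n - 1, \<dots>, 2\<close> repeated with period \<open>2 n - 2\<close>: a closed walk through
  the whole Coxeter diagram.\<close>
definition zigzag :: "nat \<Rightarrow> nat \<Rightarrow> nat" where
  "zigzag n j = zigzag_phase n (j mod (2 * n - 2))"

lemma zigzag_add_mult_period: "zigzag n (a * (2 * n - 2) + j) = zigzag n j"
  by (simp add: zigzag_def)

lemma zigzag_range: "2 \<le> n \<Longrightarrow> zigzag n j \<in> {1..n}"
proof -
  assume n: "2 \<le> n"
  have "zigzag_phase n m \<in> {1..n}" if "m < 2 * n - 2" for m
    using that n unfolding zigzag_phase_def by (cases "m < n") (simp_all, arith)
  moreover have "j mod (2 * n - 2) < 2 * n - 2" using n by simp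
  ultimately show ?thesis unfolding zigzag_def by blast
qed

lemma zigzag_adjacent: "2 \<le> n \<Longrightarrow> dependent_gens (zigzag n j) (zigzag n (Suc j)) \<and> zigzag n j \<noteq> zigzag n (Suc j)"
proof -
  assume n: "2 \<le> n"
  define P where "P = 2 * n - 2"
  define m where "m = j mod P"
  have mP: "m < P" using n by (simp add: m_def P_def)
  have s: "Suc j mod P = (if Suc m = P then 0 else Suc m)" by (simp add: m_def mod_Suc)
  have "dependent_gens (zigzag_phase n m) (zigzag_phase n (if Suc m = P then 0 else Suc m)) \<and>
      zigzag_phase n m \<noteq> zigzag_phase n (if Suc m = P then 0 else Suc m)"
  proof (cases "Suc m = P")
    case True
    then show ?thesis using n unfolding zigzag_phase_def dependent_gens_def P_def by simp arith
  next
    case False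
    then show ?thesis using n mP unfolding zigzag_phase_def dependent_gens_def P_def
      by (cases "m < n"; cases "Suc m < n"; simp; arith)
  qed
  then show ?thesis
    unfolding zigzag_def P_def[symmetric] m_def[symmetric] s .
qed

lemma zigzag_phase_inj:
  assumes n: "2 \<le> n" and m1: "m1 < 2 * n - 2" and m2: "m2 < 2 * n - 2"
    and e1: "zigzag_phase n m1 = zigzag_phase n m2"
    and e2: "zigzag_phase n (if Suc m1 = 2 * n - 2 then 0 else Suc m1) = zigzag_phase n (if Suc m2 = 2 * n - 2 then 0 else Suc m2)"
  shows "m1 = m2"
proof (cases "m1 < n")
  case c1: True
  show ?thesis
  proof (cases "m2 < n")
    case True then show ?thesis using e1 c1 by (simp add: zigzag_phase_def)
  next
    case False
    then have b2: "zigzag_phase n m2 = 2 * n - 1 - m2" by (simp add: zigzag_phase_def)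
    have "m1 + m2 = 2 * n - 2" using e1 c1 b2 m2 False by (simp add: zigzag_phase_def)
    then show ?thesis using e2 c1 False m1 m2 n unfolding zigzag_phase_def by (auto split: if_splits)
  qed
next
  case c1: False
  show ?thesis
  proof (cases "m2 < n")
    case True
    have "m1 + m2 = 2 * n - 2" using e1 c1 True m1 by (simp add: zigzag_phase_def)
    then show ?thesis using e2 c1 True m1 m2 n unfolding zigzag_phase_def by (auto split: if_splits)
  next
    case False then show ?thesis using e1 c1 m1 m2 by (simp add: zigzag_phase_def)
  qed
qed

lemma walk_zigzag: "2 \<le> n \<Longrightarrow> walk (map (zigzag n) [a..<b])"
  by (rule walk_map_upt) (rule zigzag_adjacent)

lemma zigzag_phase_determined:
  assumes n: "2 \<le> n" and e1: "zigzag n i = zigzag n r" and e2: "zigzag n (Suc i) = zigzag n (Suc r)"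
  shows "i mod (2 * n - 2) = r mod (2 * n - 2)"
proof -
  define P where "P = 2 * n - 2"
  have s: "Suc j mod P = (if Suc (j mod P) = P then 0 else Suc (j mod P))" for j by (simp add: mod_Suc)
  have P: "0 < P" using n by (simp add: P_def)
  show ?thesis
    using zigzag_phase_inj[OF n, of "i mod P" "r mod P"] e1 e2 P unfolding zigzag_def P_def[symmetric] s
    by (simp add: P_def)
qed

lemma zigzag_hits_every_letter:
  assumes n: "2 \<le> n" and v: "v \<in> {1..n}"
  shows "\<exists>t < 2 * n - 2. zigzag n (i + t) = v"
proof -
  define P where "P = 2 * n - 2"
  have P: "0 < P" using n by (simp add: P_def)
  define w where "w = v - 1"
  have w: "w < P" "zigzag_phase n w = v" using v n by (auto simp: w_def P_def zigzag_phase_def)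
  define q where "q = i mod P"
  have q: "q < P" using P by (simp add: q_def)
  have i: "i = (i div P) * P + q" by (simp add: q_def)
  obtain t where t: "t < P" "q + t = w \<or> q + t = w + P"
  proof (cases "q \<le> w")
    case True
    then show ?thesis using that[of "w - q"] w q by simp
  next
    case False
    then show ?thesis using that[of "w + P - q"] w q by simp
  qed
  have "(i + t) mod P = w"
  proof -
    have "i + t = (i div P) * P + (q + t)" using i by simp
    then have "(i + t) mod P = (q + t) mod P" by (metis mod_mult_self3)
    then show ?thesis using t w by auto
  qed
  then have "zigzag n (i + t) = v" using w by (simp add: zigzag_def P_def[symmetric])
  then show ?thesis using t by (auto simp: P_def)
qed

lemma map_zigzag_append_periods:
  "map (zigzag n) [0..<a * (2 * n - 2)] @ map (zigzag n) [0..<b] = map (zigzag n) [0..<a * (2 * n - 2) + b]"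
proof -
  have "map (zigzag n) [a * (2 * n - 2)..<a * (2 * n - 2) + b] = map (zigzag n) [0..<b]"
  proof (rule nth_equalityI)
    fix j assume "j < length (map (zigzag n) [a * (2 * n - 2)..<a * (2 * n - 2) + b])"
    then show "map (zigzag n) [a * (2 * n - 2)..<a * (2 * n - 2) + b] ! j = map (zigzag n) [0..<b] ! j"
      by (simp add: zigzag_add_mult_period)
  qed simp
  then show ?thesis by (metis le_add1 map_append upt_add_eq_append zero_le)
qed

lemma zigzag_window_covers:
  assumes n: "2 \<le> n" and len: "i + (2 * n - 2) \<le> m"
  shows "{1..n} \<subseteq> set (map (zigzag n) [i..<m])"
proof
  fix v assume "v \<in> {1..n}"
  then obtain t where t: "t < 2 * n - 2" "zigzag n (i + t) = v" using zigzag_hits_every_letter[OF n] by blast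
  then have "i + t \<in> set [i..<m]" using len by simp
  then show "v \<in> set (map (zigzag n) [i..<m])" using t(2) by (metis image_eqI set_map)
qed

text \<open>The overlap of the two zigzags cannot absorb any letter of \<open>A\<close>, since every full period of
  the zigzag meets every letter; the phases then agree because two consecutive letters of the
  zigzag determine the position modulo the period.\<close>
lemma trace_eq_zigzag_overlap:
  assumes n: "2 \<le> n" and sA: "set A \<subseteq> {1..n}"
    and e: "trace_eq (A @ map (zigzag n) [r..<L]) (map (zigzag n) [0..<L - r] @ B)"
    and len: "length A + (2 * n - 2) \<le> L - r"
  shows "trace_eq A (map (zigzag n) [0..<length A]) \<and>
    length A mod (2 * n - 2) = r mod (2 * n - 2)"
proof -
  define C where "C = map (zigzag n) [r..<L]"
  define D where "D = map (zigzag n) [0..<L - r]"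
  have wC: "walk C" and wD: "walk D" unfolding C_def D_def by (rule walk_zigzag[OF n])+
  have lenCD: "length D \<le> length C" by (simp add: C_def D_def)
  have e': "trace_eq (A @ C) (D @ B)" using e by (simp only: C_def D_def)
  from trace_eq_append_walks[OF e' wC wD lenCD] obtain i A' C'' where
    h: "i \<le> length D" "trace_eq A (take i D @ A')" "C = drop i D @ C''"
      "\<forall>c\<in>set A'. \<forall>d\<in>set (drop i D). \<not> dependent_gens d c" by blast
  have iA: "i + length A' = length A" using trace_eq_length[OF h(2)] h(1) by simp
  have dropD: "drop i D = map (zigzag n) [i..<L - r]" by (simp add: D_def drop_map)
  have covers: "{1..n} \<subseteq> set (drop i D)"
    unfolding dropD using iA len by (intro zigzag_window_covers[OF n]) linarith
  have "A' = []"
  proof (rule ccontr)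
    assume "A' \<noteq> []"
    then obtain c where c: "c \<in> set A'" by (cases A') auto
    then have "c \<in> set A" using trace_eq_set[OF h(2)] by simp
    then have "c \<in> set (drop i D)" using sA covers by blast
    then show False using h(4) c dependent_gens_refl by blast
  qed
  then have i: "i = length A" using iA by simp
  have "take i D = map (zigzag n) [0..<length A]"
    using h(1) i by (simp add: D_def take_map take_upt)
  then have tA: "trace_eq A (map (zigzag n) [0..<length A])" using h(2) \<open>A' = []\<close> by simp
  have shift: "zigzag n (i + t) = zigzag n (r + t)" if "t < 2" for t
  proof -
    have t: "t < L - r - i" using that len n i by linarith
    then have "C ! t = drop i D ! t" using h(3) by (simp add: nth_append dropD)
    then show ?thesis using t by (simp add: C_def dropD)
  qed
  have "zigzag n i = zigzag n r" using shift[of 0] by simp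
  moreover have "zigzag n (Suc i) = zigzag n (Suc r)" using shift[of 1] by simp
  ultimately have "i mod (2 * n - 2) = r mod (2 * n - 2)" by (rule zigzag_phase_determined[OF n])
  then show ?thesis using tA i by simp
qed

section \<open>Centralizers of powers of the zigzag element\<close>

lemma reduced_form_append_walk:
  assumes u: "reduced u" "set u \<subseteq> {1..<k}" and p: "walk p" "set p \<subseteq> {1..<k}"
  shows "\<exists>r u'. r \<le> length p \<and> trace_eq u (u' @ rev (take r p)) \<and> reduced (u' @ drop r p) \<and>
    fb_eq k (u @ p) (u' @ drop r p)"
proof -
  from reduced_append_walk_cancel[OF u(1) p(1)] obtain r u' where
    c: "r \<le> length p" "trace_eq u (u' @ rev (take r p))" "reduced (u' @ drop r p)" by blast
  have "fb_eq k (u @ p) ((u' @ rev (take r p)) @ p)"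
    using fb_eq_append[OF trace_eq_imp_fb_eq[OF u(2) c(2)] fb_eq_refl] .
  moreover have "fb_eq k (u' @ rev (take r p) @ take r p @ drop r p) (u' @ drop r p)"
    by (intro fb_eq_rev_cancel order_trans[OF set_take_subset p(2)])
  ultimately have "fb_eq k (u @ p) (u' @ drop r p)" using fb_eq_trans by fastforce
  then show ?thesis using c by blast
qed

lemma reduced_form_walk_append:
  assumes u: "reduced u" "set u \<subseteq> {1..<k}" and p: "walk p" "set p \<subseteq> {1..<k}"
  shows "\<exists>r u'. r \<le> length p \<and> trace_eq u (rev (drop (length p - r) p) @ u') \<and>
    reduced (take (length p - r) p @ u') \<and> fb_eq k (p @ u) (take (length p - r) p @ u')"
proof -
  have "reduced (rev u)" "walk (rev p)" using u(1) p(1) reducible_rev walk_rev by auto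
  from reduced_append_walk_cancel[OF this] obtain r w where
    c: "r \<le> length p" "trace_eq (rev u) (w @ rev (take r (rev p)))" "reduced (w @ drop r (rev p))"
    by auto
  define u' where "u' = rev w"
  have t: "trace_eq u (rev (drop (length p - r) p) @ u')"
    using trace_eq_rev[OF c(2)] by (simp add: u'_def take_rev)
  have "rev (w @ drop r (rev p)) = take (length p - r) p @ u'" by (simp add: u'_def drop_rev)
  then have red: "reduced (take (length p - r) p @ u')" using c(3) reducible_rev by metis
  let ?q = "drop (length p - r) p"
  have "fb_eq k (p @ u) (take (length p - r) p @ ?q @ rev ?q @ u')"
    using fb_eq_append[OF fb_eq_refl[of k p] trace_eq_imp_fb_eq[OF u(2) t]]
    by (simp only: append.assoc[symmetric] append_take_drop_id)
  moreover have "fb_eq k (take (length p - r) p @ ?q @ rev ?q @ u') (take (length p - r) p @ u')"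
    by (intro fb_eq_rev_cancel' order_trans[OF set_drop_subset p(2)])
  ultimately have "fb_eq k (p @ u) (take (length p - r) p @ u')" using fb_eq_trans by fastforce
  then show ?thesis using c(1) t red by blast
qed

definition zigzag_elem :: "nat \<Rightarrow> nat list set" where
  "zigzag_elem n = fb_class (Suc n) (map (zigzag n) [0..<2 * n - 2])"

context
  fixes n :: nat
  assumes n2: "2 \<le> n"
begin

lemma set_zigzag_subset: "set (map (zigzag n) [a..<b]) \<subseteq> {1..<Suc n}"
proof
  fix x assume "x \<in> set (map (zigzag n) [a..<b])"
  then obtain j where "x = zigzag n j" by auto
  then show "x \<in> {1..<Suc n}" using zigzag_range[OF n2, of j] by auto
qed

text \<open>In group terms the conclusion reads \<open>u = x\<^sup>a \<rho> (x\<^sup>b \<rho>)\<inverse>\<close>, with \<open>\<rho>\<close> an initial piece of the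
  zigzag shorter than a period.\<close>
lemma reduced_commuting_with_zigzag:
  fixes L :: nat and p defines "p \<equiv> map (zigzag n) [0..<L]"
  assumes u: "reduced u" "set u \<subseteq> {1..<Suc n}"
    and comm: "fb_eq (Suc n) (u @ p) (p @ u)" and len: "length u + (2 * n - 2) \<le> L"
  shows "\<exists>i r. i mod (2 * n - 2) = r mod (2 * n - 2) \<and>
    trace_eq u (map (zigzag n) [0..<i] @ rev (map (zigzag n) [0..<r]))"
proof -
  have wp: "walk p" "set p \<subseteq> {1..<Suc n}"
    unfolding p_def by (rule walk_zigzag[OF n2], rule set_zigzag_subset)
  have lp: "length p = L" by (simp add: p_def)
  obtain r1 u1 where c1: "r1 \<le> L" "trace_eq u (u1 @ rev (take r1 p))" "reduced (u1 @ drop r1 p)"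
    "fb_eq (Suc n) (u @ p) (u1 @ drop r1 p)"
    using reduced_form_append_walk[OF u wp] lp by auto
  obtain r2 u2 where c2: "r2 \<le> L" "trace_eq u (rev (drop (L - r2) p) @ u2)"
    "reduced (take (L - r2) p @ u2)" "fb_eq (Suc n) (p @ u) (take (L - r2) p @ u2)"
    using reduced_form_walk_append[OF u wp] lp by auto
  have "fb_eq (Suc n) (u1 @ drop r1 p) (take (L - r2) p @ u2)"
    using fb_eq_trans[OF fb_eq_trans[OF fb_eq_sym[OF c1(4)] comm] c2(4)] .
  then have eq: "trace_eq (u1 @ drop r1 p) (take (L - r2) p @ u2)"
    using reduced_fb_eq_imp_trace_eq c1(3) c2(3) by blast
  have l1: "length u = length u1 + r1" using trace_eq_length[OF c1(2)] c1(1) lp by simp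
  have "length u = r2 + length u2" using trace_eq_length[OF c2(2)] c2(1) lp by simp
  moreover have "length u1 + (L - r1) = (L - r2) + length u2" using trace_eq_length[OF eq] lp c1(1) c2(1) by simp
  ultimately have "r2 = r1" using l1 c1(1) c2(1) by linarith
  then have "trace_eq (u1 @ map (zigzag n) [r1..<L]) (map (zigzag n) [0..<L - r1] @ u2)"
    using eq by (simp add: p_def drop_map take_map take_upt)
  moreover have "set u1 \<subseteq> {1..n}" using trace_eq_set[OF c1(2)] u(2) by auto
  moreover have "length u1 + (2 * n - 2) \<le> L - r1" using l1 len by linarith
  ultimately have "trace_eq u1 (map (zigzag n) [0..<length u1])"
    "length u1 mod (2 * n - 2) = r1 mod (2 * n - 2)"
    using trace_eq_zigzag_overlap[OF n2] by blast+
  moreover have "take r1 p = map (zigzag n) [0..<r1]" using c1(1) by (simp add: p_def take_map take_upt)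
  ultimately show ?thesis
    using trace_eq_trans[OF c1(2) trace_eq_append[OF _ trace_eq_refl]] by metis
qed

lemma concat_replicate_zigzag:
  "concat (replicate m (map (zigzag n) [0..<2 * n - 2])) = map (zigzag n) [0..<m * (2 * n - 2)]"
proof (induction m)
  case (Suc m)
  have "concat (replicate (Suc m) (map (zigzag n) [0..<2 * n - 2])) =
      map (zigzag n) [0..<m * (2 * n - 2)] @ map (zigzag n) [0..<2 * n - 2]"
    using Suc by (simp add: replicate_append_same[symmetric])
  then show ?case by (simp add: map_zigzag_append_periods add.commute)
qed simp

lemma zigzag_elem_pow:
  "zigzag_elem n [^]\<^bsub>FB (Suc n)\<^esub> (m::nat) = fb_class (Suc n) (map (zigzag n) [0..<m * (2 * n - 2)])"
  unfolding zigzag_elem_def FB_pow concat_replicate_zigzag ..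

lemma zigzag_elem_carrier: "zigzag_elem n \<in> carrier (FB (Suc n))"
  unfolding zigzag_elem_def by (rule FB_classI[OF set_zigzag_subset])

lemma zigzag_elem_pow_eq_one_iff:
  "zigzag_elem n [^]\<^bsub>FB (Suc n)\<^esub> (m::nat) = \<one>\<^bsub>FB (Suc n)\<^esub> \<longleftrightarrow> m = 0"
proof
  assume "zigzag_elem n [^]\<^bsub>FB (Suc n)\<^esub> m = \<one>\<^bsub>FB (Suc n)\<^esub>"
  then have "fb_eq (Suc n) (map (zigzag n) [0..<m * (2 * n - 2)]) []"
    by (simp add: zigzag_elem_pow FB_one fb_class_eq_iff)
  then have "trace_eq (map (zigzag n) [0..<m * (2 * n - 2)]) []"
    using reduced_fb_eq_imp_trace_eq reduced_walk[OF walk_zigzag[OF n2]] reduced_Nil by blast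
  then have "m * (2 * n - 2) = 0" using trace_eq_length by fastforce
  then show "m = 0" using n2 by simp
qed simp

lemma zigzag_prefix_class:
  "fb_class (Suc n) (map (zigzag n) [0..<i]) =
    zigzag_elem n [^]\<^bsub>FB (Suc n)\<^esub> (i div (2 * n - 2)) \<otimes>\<^bsub>FB (Suc n)\<^esub>
    fb_class (Suc n) (map (zigzag n) [0..<i mod (2 * n - 2)])"
  using map_zigzag_append_periods[of n "i div (2 * n - 2)" "i mod (2 * n - 2)"]
  by (simp add: zigzag_elem_pow FB_mult fb_mult_class div_mult_mod_eq)

lemma zigzag_prefix_quotient:
  assumes "i mod (2 * n - 2) = r mod (2 * n - 2)"
  shows "fb_class (Suc n) (map (zigzag n) [0..<i]) \<otimes>\<^bsub>FB (Suc n)\<^esub>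
      inv\<^bsub>FB (Suc n)\<^esub> fb_class (Suc n) (map (zigzag n) [0..<r]) =
    zigzag_elem n [^]\<^bsub>FB (Suc n)\<^esub> (int (i div (2 * n - 2)) - int (r div (2 * n - 2)))"
proof -
  let ?G = "FB (Suc n)" and ?x = "zigzag_elem n" and ?P = "2 * n - 2"
  interpret group ?G by (rule group_FB)
  have x: "?x \<in> carrier ?G" by (rule zigzag_elem_carrier)
  define \<rho> where "\<rho> = fb_class (Suc n) (map (zigzag n) [0..<i mod ?P])"
  have \<rho>: "\<rho> \<in> carrier ?G" unfolding \<rho>_def by (rule FB_classI[OF set_zigzag_subset])
  have "\<rho> \<otimes>\<^bsub>?G\<^esub> (inv\<^bsub>?G\<^esub> \<rho> \<otimes>\<^bsub>?G\<^esub> y) = y" if "y \<in> carrier ?G" for y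
    using that \<rho> by (simp add: m_assoc[symmetric])
  then have "?x [^]\<^bsub>?G\<^esub> (i div ?P) \<otimes>\<^bsub>?G\<^esub> \<rho> \<otimes>\<^bsub>?G\<^esub> inv\<^bsub>?G\<^esub> (?x [^]\<^bsub>?G\<^esub> (r div ?P) \<otimes>\<^bsub>?G\<^esub> \<rho>) =
      ?x [^]\<^bsub>?G\<^esub> (i div ?P) \<otimes>\<^bsub>?G\<^esub> inv\<^bsub>?G\<^esub> (?x [^]\<^bsub>?G\<^esub> (r div ?P))"
    using x \<rho> by (simp add: inv_mult_group m_assoc)
  also have "\<dots> = ?x [^]\<^bsub>?G\<^esub> (int (i div ?P) - int (r div ?P))"
    using x by (simp add: int_pow_diff int_pow_int)
  finally show ?thesis
    unfolding zigzag_prefix_class[of i] zigzag_prefix_class[of r] \<rho>_def assms .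
qed

theorem centralizer_zigzag_elem_pow:
  assumes h: "h \<in> carrier (FB (Suc n))" and N: "N \<noteq> (0::nat)"
    and comm: "h \<otimes>\<^bsub>FB (Suc n)\<^esub> zigzag_elem n [^]\<^bsub>FB (Suc n)\<^esub> N =
      zigzag_elem n [^]\<^bsub>FB (Suc n)\<^esub> N \<otimes>\<^bsub>FB (Suc n)\<^esub> h"
  shows "\<exists>j::int. h = zigzag_elem n [^]\<^bsub>FB (Suc n)\<^esub> j"
proof -
  let ?G = "FB (Suc n)" and ?x = "zigzag_elem n" and ?P = "2 * n - 2" and ?cl = "fb_class (Suc n)"
  interpret group ?G by (rule group_FB)
  have x: "?x \<in> carrier ?G" by (rule zigzag_elem_carrier)
  obtain u where u: "reduced u" "set u \<subseteq> {1..<Suc n}" "h = ?cl u"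
    using FB_carrier_reduced[OF h] by blast
  define M where "M = N * (length u + 1)"
  have "h \<otimes>\<^bsub>?G\<^esub> (?x [^]\<^bsub>?G\<^esub> N) [^]\<^bsub>?G\<^esub> (length u + 1) =
      (?x [^]\<^bsub>?G\<^esub> N) [^]\<^bsub>?G\<^esub> (length u + 1) \<otimes>\<^bsub>?G\<^esub> h"
    using group_commutes_pow[OF comm[symmetric] nat_pow_closed[OF x] h] by (rule sym)
  moreover have "(?x [^]\<^bsub>?G\<^esub> N) [^]\<^bsub>?G\<^esub> (length u + 1) = ?cl (map (zigzag n) [0..<M * ?P])"
    unfolding M_def by (rule trans[OF nat_pow_pow[OF x] zigzag_elem_pow])
  ultimately have "?cl (u @ map (zigzag n) [0..<M * ?P]) = ?cl (map (zigzag n) [0..<M * ?P] @ u)"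
    by (simp only: u(3) FB_mult fb_mult_class)
  then have comm_word: "fb_eq (Suc n) (u @ map (zigzag n) [0..<M * ?P]) (map (zigzag n) [0..<M * ?P] @ u)"
    unfolding fb_class_eq_iff .
  have len: "length u + ?P \<le> M * ?P"
  proof -
    have "length u * 1 \<le> length u * ?P" using n2 by (intro mult_le_mono2) simp
    then have "length u + ?P \<le> (length u + 1) * ?P" by simp
    also have "\<dots> \<le> M * ?P" unfolding M_def using N by (intro mult_le_mono1) (cases N, simp_all)
    finally show ?thesis .
  qed
  obtain i r where ir: "i mod ?P = r mod ?P"
    "trace_eq u (map (zigzag n) [0..<i] @ rev (map (zigzag n) [0..<r]))"
    using reduced_commuting_with_zigzag[OF u(1,2) comm_word len] by blast
  have "h = ?cl (map (zigzag n) [0..<i]) \<otimes>\<^bsub>?G\<^esub> inv\<^bsub>?G\<^esub> ?cl (map (zigzag n) [0..<r])"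
    using trace_eq_imp_fb_eq[OF u(2) ir(2)] set_zigzag_subset
    by (simp add: u(3) fb_class_eq_iff FB_inv FB_mult fb_mult_class)
  then show ?thesis using zigzag_prefix_quotient[OF ir(1)] by blast
qed

end

section \<open>The pure subgroup and subgroups of finite index\<close>

lemma perm_of_word_Nil [simp]: "perm_of_word [] = id"
  by (simp add: perm_of_word_def)

lemma perm_of_word_Cons: "perm_of_word (a # u) = transpose a (Suc a) \<circ> perm_of_word u"
  by (simp add: perm_of_word_def)

lemma perm_of_word_append: "perm_of_word (u @ v) = perm_of_word u \<circ> perm_of_word v"
  by (induction u) (simp_all add: perm_of_word_Cons comp_assoc)

lemma transpositions_commute:
  assumes "\<not> dependent_gens i j"
  shows "transpose i (Suc i) \<circ> transpose j (Suc j) = transpose j (Suc j) \<circ> transpose i (Suc i)"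
proof (rule ext)
  fix x
  show "(transpose i (Suc i) \<circ> transpose j (Suc j)) x = (transpose j (Suc j) \<circ> transpose i (Suc i)) x"
    using assms by (simp add: transpose_def dependent_gens_def) arith
qed

lemma fb_eq_imp_perm_of_word_eq:
  assumes "fb_eq k u v"
  shows "perm_of_word u = perm_of_word v"
proof -
  have perm_step: "perm_of_word u = perm_of_word v" if "fb_step k u v" for u v
    using that
  proof (induction rule: fb_step.induct)
    case (cancel i xs ys)
    then show ?case by (simp add: perm_of_word_append perm_of_word_Cons comp_assoc)
  next
    case (comm i j xs ys)
    then have nd: "\<not> dependent_gens i j" using far_apart_iff_not_dependent_gens by blast
    have "perm_of_word [i, j] = perm_of_word [j, i]"
      by (simp only: perm_of_word_Cons perm_of_word_Nil comp_id transpositions_commute[OF nd])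
    then show ?case by (simp only: perm_of_word_append)
  qed
  show ?thesis using assms unfolding fb_eq_def
  proof (induction rule: rtranclp_induct)
    case (step b c)
    then show ?case using perm_step by fastforce
  qed simp
qed

lemma PFB_carrier: "carrier (PFB k) = {C \<in> carrier (FB k). \<forall>w\<in>C. perm_of_word w = id}"
  by (simp add: PFB_def)

lemma PFB_classI: "set u \<subseteq> {1..<k} \<Longrightarrow> perm_of_word u = id \<Longrightarrow> fb_class k u \<in> carrier (PFB k)"
  using FB_classI fb_eq_imp_perm_of_word_eq by (auto simp: PFB_carrier fb_class_def)

lemma PFB_carrier_class:
  assumes "C \<in> carrier (PFB k)"
  obtains u where "C = fb_class k u" "set u \<subseteq> {1..<k}" "perm_of_word u = id"
proof -
  obtain u where "C = fb_class k u" "set u \<subseteq> {1..<k}" using assms by (auto simp: PFB_carrier FB_carrier)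
  moreover have "u \<in> C" using \<open>C = fb_class k u\<close> by (simp add: fb_class_def)
  ultimately show thesis using that assms by (auto simp: PFB_carrier)
qed

lemma subgroup_PFB: "subgroup (carrier (PFB k)) (FB k)"
proof (rule group.subgroupI[OF group_FB])
  show "carrier (PFB k) \<subseteq> carrier (FB k)" by (auto simp: PFB_carrier)
  show "carrier (PFB k) \<noteq> {}" using PFB_classI[of "[]" k] by auto
next
  fix a assume "a \<in> carrier (PFB k)"
  then obtain u where u: "a = fb_class k u" "set u \<subseteq> {1..<k}" "perm_of_word u = id"
    by (rule PFB_carrier_class)
  have "perm_of_word (rev u @ u) = perm_of_word []"
    using fb_eq_imp_perm_of_word_eq fb_eq_rev_cancel[OF u(2), of "[]" "[]"] by simp
  then have "perm_of_word (rev u) = id" using u(3) by (simp add: perm_of_word_append)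
  then show "inv\<^bsub>FB k\<^esub> a \<in> carrier (PFB k)" using u FB_inv PFB_classI by auto
next
  fix a b assume "a \<in> carrier (PFB k)" "b \<in> carrier (PFB k)"
  obtain u where "a = fb_class k u" "set u \<subseteq> {1..<k}" "perm_of_word u = id"
    using \<open>a \<in> carrier (PFB k)\<close> by (rule PFB_carrier_class)
  moreover obtain v where "b = fb_class k v" "set v \<subseteq> {1..<k}" "perm_of_word v = id"
    using \<open>b \<in> carrier (PFB k)\<close> by (rule PFB_carrier_class)
  ultimately show "a \<otimes>\<^bsub>FB k\<^esub> b \<in> carrier (PFB k)"
    by (simp add: FB_mult fb_mult_class perm_of_word_append PFB_classI)
qed

lemma group_PFB: "group (PFB k)"
  using subgroup.subgroup_is_group[OF subgroup_PFB group_FB] by (simp add: PFB_def)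

lemma PFB_nat_pow: "x [^]\<^bsub>PFB k\<^esub> (m::nat) = x [^]\<^bsub>FB k\<^esub> m"
  by (simp add: PFB_def nat_pow_def)

lemma perm_of_word_permutes: "set u \<subseteq> {1..<k} \<Longrightarrow> perm_of_word u permutes {1..k}"
proof (induction u)
  case (Cons a u)
  have "transpose a (Suc a) permutes {1..k}" using Cons.prems by (intro permutes_swap_id) auto
  moreover have "perm_of_word u permutes {1..k}" using Cons by simp
  ultimately show ?case unfolding perm_of_word_Cons by (rule permutes_compose[rotated])
qed (simp add: permutes_id)

lemma permutes_funpow_eq_id:
  assumes "p permutes {1..(k::nat)}"
  shows "\<exists>m. m \<noteq> 0 \<and> p ^^ m = id"
proof -
  interpret S: group "sym_group k" by (rule sym_group_is_group)
  have p: "p \<in> carrier (sym_group k)" using assms by (simp add: sym_group_carrier)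
  have fin: "finite (carrier (sym_group k))" by (simp add: sym_group_def finite_permutations)
  have "p [^]\<^bsub>sym_group k\<^esub> m = p ^^ m" for m :: nat
    by (induction m) (simp_all add: sym_group_mult sym_group_one funpow_Suc_right del: funpow.simps)
  then have "p ^^ S.ord p = id" using S.pow_ord_eq_1[OF p] by (simp add: sym_group_one)
  then show ?thesis using S.ord_ge_1[OF fin p] by (intro exI[of _ "S.ord p"]) simp
qed

lemma FB_pow_in_PFB:
  assumes "g \<in> carrier (FB k)"
  shows "\<exists>m::nat. m \<noteq> 0 \<and> g [^]\<^bsub>FB k\<^esub> m \<in> carrier (PFB k)"
proof -
  obtain w where w: "g = fb_class k w" "set w \<subseteq> {1..<k}" using assms by (auto simp: FB_carrier)
  obtain m where m: "m \<noteq> 0" "perm_of_word w ^^ m = id"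
    using permutes_funpow_eq_id[OF perm_of_word_permutes[OF w(2)]] by blast
  have "perm_of_word (concat (replicate m w)) = perm_of_word w ^^ m"
    by (induction m) (simp_all add: perm_of_word_append)
  then have "fb_class k (concat (replicate m w)) \<in> carrier (PFB k)"
    using w(2) m(2) by (intro PFB_classI) auto
  then show ?thesis using m(1) by (intro exI[of _ m]) (simp add: w(1) FB_pow)
qed

lemma (in group) finite_index_subgroup_pow_mem:
  assumes H: "subgroup H G" and fin: "finite (rcosets H)" and g: "g \<in> carrier G"
  shows "\<exists>m::nat. m \<noteq> 0 \<and> g [^] m \<in> H"
proof -
  define f where "f j = H #> g [^] (j::nat)" for j
  have "range f \<subseteq> rcosets H" using rcosetsI subgroup.subset[OF H] g by (auto simp: f_def)
  then have fin_range: "finite (range f)" using fin finite_subset by blast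
  have "\<not> inj f"
  proof
    assume "inj f"
    then have "finite (UNIV :: nat set)" using finite_imageD fin_range by blast
    then show False by simp
  qed
  obtain a b where ab: "a < b" "f a = f b"
  proof -
    obtain a b where "a \<noteq> b" "f a = f b" using \<open>\<not> inj f\<close> unfolding inj_def by blast
    then show thesis using that[of a b] that[of b a] by (cases "a < b") auto
  qed
  have "H #> g [^] a = H #> g [^] b" using ab(2) by (simp add: f_def)
  then have "g [^] b \<in> H #> g [^] a" using rcos_self[OF nat_pow_closed[OF g] H] by (rule ssubst)
  then have "g [^] b \<otimes> inv (g [^] a) \<in> H"
    by (rule subgroup.rcos_module_imp[OF H is_group nat_pow_closed[OF g]])
  moreover have "g [^] b \<otimes> inv (g [^] a) = g [^] (b - a)"
    using inv_solve_right'[OF nat_pow_closed[OF g] nat_pow_closed[OF g] nat_pow_closed[OF g]]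
      nat_pow_mult[OF g, of "b - a" a] ab(1) by simp
  ultimately show ?thesis using ab(1) by (intro exI[of _ "b - a"]) simp
qed

section \<open>Direct products and centralizers\<close>

definition centralizers_commensurable :: "('a, 'b) monoid_scheme \<Rightarrow> 'a \<Rightarrow> bool" where
  "centralizers_commensurable G x \<longleftrightarrow>
    (\<forall>h\<in>carrier G. \<forall>t::nat. t \<noteq> 0 \<longrightarrow> h \<otimes>\<^bsub>G\<^esub> x [^]\<^bsub>G\<^esub> t = x [^]\<^bsub>G\<^esub> t \<otimes>\<^bsub>G\<^esub> h \<longrightarrow>
      h \<noteq> \<one>\<^bsub>G\<^esub> \<longrightarrow> (\<exists>m::nat. \<exists>j::int. m \<noteq> 0 \<and> j \<noteq> 0 \<and> h [^]\<^bsub>G\<^esub> m = x [^]\<^bsub>G\<^esub> j))"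

lemma centralizers_commensurableD:
  assumes "centralizers_commensurable G x" "h \<in> carrier G" "t \<noteq> 0"
    "h \<otimes>\<^bsub>G\<^esub> x [^]\<^bsub>G\<^esub> (t::nat) = x [^]\<^bsub>G\<^esub> t \<otimes>\<^bsub>G\<^esub> h" "h \<noteq> \<one>\<^bsub>G\<^esub>"
  shows "\<exists>m::nat. \<exists>j::int. m \<noteq> 0 \<and> j \<noteq> 0 \<and> h [^]\<^bsub>G\<^esub> m = x [^]\<^bsub>G\<^esub> j"
  using assms unfolding centralizers_commensurable_def by blast

lemma DirProd_nat_pow: "(a, b) [^]\<^bsub>A \<times>\<times> B\<^esub> (n::nat) = (a [^]\<^bsub>A\<^esub> n, b [^]\<^bsub>B\<^esub> n)"
  by (induction n) simp_all

lemma (in group) nontrivial_commutes_with_power: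
  assumes "carrier G \<noteq> {\<one>}" and a: "a \<in> carrier G"
  shows "\<exists>e t. e \<in> carrier G \<and> e \<noteq> \<one> \<and> (t::nat) \<noteq> 0 \<and> e \<otimes> a [^] t = a [^] t \<otimes> e"
proof (cases "\<exists>s::nat. s \<noteq> 0 \<and> a [^] s = \<one>")
  case True
  then obtain s :: nat where s: "s \<noteq> 0" "a [^] s = \<one>" by blast
  obtain e where "e \<in> carrier G" "e \<noteq> \<one>" using assms(1) one_closed by blast
  then show ?thesis using s by (intro exI[of _ e] exI[of _ s]) simp
next
  case False
  then have "a \<noteq> \<one>" by (metis nat_pow_one one_neq_zero)
  then show ?thesis using a by (intro exI[of _ a] exI[of _ "1::nat"]) simp
qed

lemma not_iso_DirProd_of_infinite_order_snd:
  assumes G: "group G" and A: "group A" and B: "group B" and \<phi>: "\<phi> \<in> iso G (A \<times>\<times> B)"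
    and x: "x \<in> carrier G" and cc: "centralizers_commensurable G x"
    and A_nontriv: "carrier A \<noteq> {\<one>\<^bsub>A\<^esub>}"
    and b_inf: "\<forall>m::nat. m \<noteq> 0 \<longrightarrow> snd (\<phi> x) [^]\<^bsub>B\<^esub> m \<noteq> \<one>\<^bsub>B\<^esub>"
  shows False
proof -
  interpret G: group G by (rule G)
  interpret A: group A by (rule A)
  interpret B: group B by (rule B)
  have hom: "\<phi> \<in> hom G (A \<times>\<times> B)" and bij: "bij_betw \<phi> (carrier G) (carrier A \<times> carrier B)"
    using \<phi> by (simp_all add: iso_def)
  interpret GH: group_hom G "A \<times>\<times> B" \<phi>
    using hom by (simp add: group_hom_def group_hom_axioms_def G DirProd_group[OF A B])
  obtain a b where ab: "\<phi> x = (a, b)" "a \<in> carrier A" "b \<in> carrier B"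
    using GH.hom_closed[OF x] by (cases "\<phi> x") auto
  obtain e and t :: nat where e: "e \<in> carrier A" "e \<noteq> \<one>\<^bsub>A\<^esub>" "t \<noteq> 0"
    "e \<otimes>\<^bsub>A\<^esub> a [^]\<^bsub>A\<^esub> t = a [^]\<^bsub>A\<^esub> t \<otimes>\<^bsub>A\<^esub> e"
    using A.nontrivial_commutes_with_power[OF A_nontriv ab(2)] by blast
  define h where "h = inv_into (carrier G) \<phi> (e, \<one>\<^bsub>B\<^esub>)"
  have img: "(e, \<one>\<^bsub>B\<^esub>) \<in> \<phi> ` carrier G" using bij e(1) by (simp add: bij_betw_def)
  have h: "h \<in> carrier G" "\<phi> h = (e, \<one>\<^bsub>B\<^esub>)"
    unfolding h_def using img by (simp_all add: inv_into_into f_inv_into_f)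
  have inj: "inj_on \<phi> (carrier G)" using bij by (simp add: bij_betw_def)
  have "\<phi> (h \<otimes>\<^bsub>G\<^esub> x [^]\<^bsub>G\<^esub> t) = \<phi> (x [^]\<^bsub>G\<^esub> t \<otimes>\<^bsub>G\<^esub> h)"
    using h x ab e(1,4) by (simp add: GH.hom_nat_pow DirProd_nat_pow)
  then have comm: "h \<otimes>\<^bsub>G\<^esub> x [^]\<^bsub>G\<^esub> t = x [^]\<^bsub>G\<^esub> t \<otimes>\<^bsub>G\<^esub> h"
    by (rule inj_onD[OF inj]) (simp_all add: h(1) x)
  have "h \<noteq> \<one>\<^bsub>G\<^esub>" using h(2) e(2) by auto
  then obtain m :: nat and j :: int where mj: "m \<noteq> 0" "j \<noteq> 0" "h [^]\<^bsub>G\<^esub> m = x [^]\<^bsub>G\<^esub> j"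
    using centralizers_commensurableD[OF cc h(1) e(3) comm] by blast
  have snd_hom: "snd \<circ> \<phi> \<in> hom G B" using hom by (simp add: hom_pairwise)
  have "\<one>\<^bsub>B\<^esub> = snd (\<phi> h) [^]\<^bsub>B\<^esub> m" using h(2) by simp
  also have "\<dots> = snd (\<phi> (h [^]\<^bsub>G\<^esub> m))" using hom_nat_pow[OF snd_hom h(1) G B, of m] by simp
  also have "\<dots> = snd (\<phi> (x [^]\<^bsub>G\<^esub> j))" using mj(3) by simp
  also have "\<dots> = b [^]\<^bsub>B\<^esub> j" using hom_int_pow[OF snd_hom x G B] ab(1) by simp
  finally have "int (B.ord b) dvd j" using B.int_pow_eq_id[OF ab(3)] by (metis (no_types))
  moreover have "B.ord b = 0" using b_inf ab by (simp add: B.ord_eq_0)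
  ultimately show False using mj(2) by simp
qed

lemma iso_DirProd_component_infinite_order:
  assumes G: "group G" and A: "group A" and B: "group B" and \<phi>: "\<phi> \<in> iso G (A \<times>\<times> B)"
    and x: "x \<in> carrier G" and x_inf: "\<forall>m::nat. m \<noteq> 0 \<longrightarrow> x [^]\<^bsub>G\<^esub> m \<noteq> \<one>\<^bsub>G\<^esub>"
  shows "(\<forall>m::nat. m \<noteq> 0 \<longrightarrow> snd (\<phi> x) [^]\<^bsub>B\<^esub> m \<noteq> \<one>\<^bsub>B\<^esub>) \<or>
    (\<forall>m::nat. m \<noteq> 0 \<longrightarrow> fst (\<phi> x) [^]\<^bsub>A\<^esub> m \<noteq> \<one>\<^bsub>A\<^esub>)"
proof (rule ccontr)
  assume "\<not> ?thesis"
  then obtain r s :: nat where rs: "r \<noteq> 0" "snd (\<phi> x) [^]\<^bsub>B\<^esub> r = \<one>\<^bsub>B\<^esub>"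
    "s \<noteq> 0" "fst (\<phi> x) [^]\<^bsub>A\<^esub> s = \<one>\<^bsub>A\<^esub>"
    by blast
  interpret A: group A by (rule A)
  interpret B: group B by (rule B)
  interpret GH: group_hom G "A \<times>\<times> B" \<phi>
    using \<phi> by (simp add: group_hom_def group_hom_axioms_def G DirProd_group[OF A B] iso_def)
  obtain a b where ab: "\<phi> x = (a, b)" "a \<in> carrier A" "b \<in> carrier B"
    using GH.hom_closed[OF x] by (cases "\<phi> x") auto
  have "\<phi> (x [^]\<^bsub>G\<^esub> (s * r)) = \<phi> \<one>\<^bsub>G\<^esub>"
    using rs ab x A.nat_pow_pow[of a s r] B.nat_pow_pow[of b r s]
    by (simp add: GH.hom_nat_pow DirProd_nat_pow mult.commute)
  moreover have "inj_on \<phi> (carrier G)" using \<phi> by (simp add: iso_def bij_betw_def)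
  ultimately have "x [^]\<^bsub>G\<^esub> (s * r) = \<one>\<^bsub>G\<^esub>"
    by (intro inj_onD[of \<phi> "carrier G"]) (simp_all add: x GH.G.nat_pow_closed)
  then show False using x_inf rs by simp
qed

theorem not_iso_DirProd_if_centralizers_commensurable:
  assumes G: "group G" and A: "group A" and B: "group B"
    and x: "x \<in> carrier G" and x_inf: "\<forall>m::nat. m \<noteq> 0 \<longrightarrow> x [^]\<^bsub>G\<^esub> m \<noteq> \<one>\<^bsub>G\<^esub>"
    and cc: "centralizers_commensurable G x"
    and A_nontriv: "carrier A \<noteq> {\<one>\<^bsub>A\<^esub>}" and B_nontriv: "carrier B \<noteq> {\<one>\<^bsub>B\<^esub>}"
  shows "\<not> G \<cong> A \<times>\<times> B"
proof
  assume "G \<cong> A \<times>\<times> B"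
  then obtain \<phi> where \<phi>: "\<phi> \<in> iso G (A \<times>\<times> B)" by (auto simp: is_iso_def)
  from iso_DirProd_component_infinite_order[OF G A B \<phi> x x_inf] show False
  proof
    assume "\<forall>m::nat. m \<noteq> 0 \<longrightarrow> snd (\<phi> x) [^]\<^bsub>B\<^esub> m \<noteq> \<one>\<^bsub>B\<^esub>"
    then show False by (rule not_iso_DirProd_of_infinite_order_snd[OF G A B \<phi> x cc A_nontriv])
  next
    assume a_inf: "\<forall>m::nat. m \<noteq> 0 \<longrightarrow> fst (\<phi> x) [^]\<^bsub>A\<^esub> m \<noteq> \<one>\<^bsub>A\<^esub>"
    define \<psi> where "\<psi> = (\<lambda>(a, b). (b, a)) \<circ> \<phi>"
    have \<psi>: "\<psi> \<in> iso G (B \<times>\<times> A)" unfolding \<psi>_def by (rule iso_set_trans[OF \<phi> DirProd_commute_iso_set])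
    have "snd (\<psi> x) = fst (\<phi> x)" by (simp add: \<psi>_def split_beta)
    then show False using not_iso_DirProd_of_infinite_order_snd[OF G B A \<psi> x cc B_nontriv] a_inf by simp
  qed
qed

section \<open>Finite index subgroups of \<open>PFB\<^sub>k\<close>\<close>

context
  fixes n :: nat
  assumes n2: "2 \<le> n"
begin

lemma finite_index_subgroup_zigzag_power:
  assumes H: "subgroup H (PFB (Suc n))" and fin: "finite (rcosets\<^bsub>PFB (Suc n)\<^esub> H)"
  shows "\<exists>m::nat. m \<noteq> 0 \<and> zigzag_elem n [^]\<^bsub>FB (Suc n)\<^esub> m \<in> H"
proof -
  interpret F: group "FB (Suc n)" by (rule group_FB)
  interpret P: group "PFB (Suc n)" by (rule group_PFB)
  obtain m0 :: nat where m0: "m0 \<noteq> 0" "zigzag_elem n [^]\<^bsub>FB (Suc n)\<^esub> m0 \<in> carrier (PFB (Suc n))"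
    using FB_pow_in_PFB[OF zigzag_elem_carrier[OF n2]] by blast
  obtain m1 :: nat where m1: "m1 \<noteq> 0" "(zigzag_elem n [^]\<^bsub>FB (Suc n)\<^esub> m0) [^]\<^bsub>PFB (Suc n)\<^esub> m1 \<in> H"
    using P.finite_index_subgroup_pow_mem[OF H fin m0(2)] by blast
  then have "zigzag_elem n [^]\<^bsub>FB (Suc n)\<^esub> (m0 * m1) \<in> H"
    by (simp add: PFB_nat_pow F.nat_pow_pow[OF zigzag_elem_carrier[OF n2]])
  then show ?thesis using m0(1) m1(1) by (intro exI[of _ "m0 * m1"]) simp
qed

lemma subgroup_zigzag_power_infinite_order:
  fixes m j :: nat
  assumes "m \<noteq> 0" and "j \<noteq> 0"
  shows "(zigzag_elem n [^]\<^bsub>FB (Suc n)\<^esub> m) [^]\<^bsub>(FB (Suc n))\<lparr>carrier := H\<rparr>\<^esub> j \<noteq>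
    \<one>\<^bsub>(FB (Suc n))\<lparr>carrier := H\<rparr>\<^esub>"
proof -
  interpret F: group "FB (Suc n)" by (rule group_FB)
  show ?thesis
    using assms zigzag_elem_pow_eq_one_iff[OF n2, of "m * j"]
    by (simp add: F.nat_pow_consistent[symmetric] F.nat_pow_pow[OF zigzag_elem_carrier[OF n2]])
qed

lemma subgroup_centralizers_commensurable:
  fixes m :: nat
  assumes H: "subgroup H (FB (Suc n))" and m: "m \<noteq> 0" "zigzag_elem n [^]\<^bsub>FB (Suc n)\<^esub> m \<in> H"
  shows "centralizers_commensurable ((FB (Suc n))\<lparr>carrier := H\<rparr>) (zigzag_elem n [^]\<^bsub>FB (Suc n)\<^esub> m)"
  unfolding centralizers_commensurable_def
proof (intro ballI allI impI)
  let ?F = "FB (Suc n)" and ?z = "zigzag_elem n"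
  let ?G = "?F\<lparr>carrier := H\<rparr>" and ?x = "?z [^]\<^bsub>?F\<^esub> m"
  interpret F: group ?F by (rule group_FB)
  have z: "?z \<in> carrier ?F" by (rule zigzag_elem_carrier[OF n2])
  fix h and t :: nat
  assume h: "h \<in> carrier ?G" and t: "t \<noteq> 0" and ne: "h \<noteq> \<one>\<^bsub>?G\<^esub>"
    and comm: "h \<otimes>\<^bsub>?G\<^esub> ?x [^]\<^bsub>?G\<^esub> t = ?x [^]\<^bsub>?G\<^esub> t \<otimes>\<^bsub>?G\<^esub> h"
  have hF: "h \<in> carrier ?F" using h subgroup.subset[OF H] by auto
  have "h \<otimes>\<^bsub>?F\<^esub> ?z [^]\<^bsub>?F\<^esub> (m * t) = ?z [^]\<^bsub>?F\<^esub> (m * t) \<otimes>\<^bsub>?F\<^esub> h"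
    using comm by (simp add: F.nat_pow_consistent[symmetric] F.nat_pow_pow[OF z])
  moreover have "m * t \<noteq> 0" using m(1) t by simp
  ultimately obtain i :: int where i: "h = ?z [^]\<^bsub>?F\<^esub> i"
    using centralizer_zigzag_elem_pow[OF n2 hF] by blast
  have "i \<noteq> 0" using ne i by (cases "i = 0") simp_all
  moreover have "h [^]\<^bsub>?G\<^esub> m = ?x [^]\<^bsub>?G\<^esub> i"
  proof -
    have "h [^]\<^bsub>?F\<^esub> m = (?z [^]\<^bsub>?F\<^esub> i) [^]\<^bsub>?F\<^esub> int m" by (simp add: i int_pow_int)
    also have "\<dots> = (?z [^]\<^bsub>?F\<^esub> int m) [^]\<^bsub>?F\<^esub> i"
      using z by (simp add: F.int_pow_pow mult.commute)
    also have "\<dots> = ?x [^]\<^bsub>?F\<^esub> i" by (simp add: int_pow_int)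
    finally have "h [^]\<^bsub>?F\<^esub> m = ?x [^]\<^bsub>?F\<^esub> i" .
    then show ?thesis
      using F.int_pow_consistent[OF H m(2)] F.nat_pow_consistent[of h m H] by simp
  qed
  ultimately show "\<exists>m'::nat. \<exists>j::int. m' \<noteq> 0 \<and> j \<noteq> 0 \<and> h [^]\<^bsub>?G\<^esub> m' = ?x [^]\<^bsub>?G\<^esub> j"
    using m(1) by blast
qed

end

theorem corollary2p17:
  fixes k :: nat and H :: "nat list set set"
    and A :: "'a monoid" and B :: "'b monoid"
  assumes "k \<ge> 4"
    and "subgroup H (PFB k)"
    and "finite (rcosets\<^bsub>PFB k\<^esub> H)"
    and "group A" and "group B"
    and "infinite (carrier A)" and "infinite (carrier B)"
  shows "\<not> ((PFB k)\<lparr>carrier := H\<rparr> \<cong> A \<times>\<times> B)"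
proof -
  define n where "n = k - 1"
  have k: "k = Suc n" and n2: "2 \<le> n" using assms(1) by (simp_all add: n_def)
  let ?F = "FB (Suc n)"
  have H: "subgroup H ?F"
    using group.incl_subgroup[OF group_FB subgroup_PFB] assms(2) k by (simp add: PFB_def)
  obtain m :: nat where m: "m \<noteq> 0" "zigzag_elem n [^]\<^bsub>?F\<^esub> m \<in> H"
    using finite_index_subgroup_zigzag_power[OF n2] assms(2,3) k by blast
  have "\<not> ?F\<lparr>carrier := H\<rparr> \<cong> A \<times>\<times> B"
  proof (rule not_iso_DirProd_if_centralizers_commensurable)
    show "group (?F\<lparr>carrier := H\<rparr>)" by (rule subgroup.subgroup_is_group[OF H group_FB])
    show "zigzag_elem n [^]\<^bsub>?F\<^esub> m \<in> carrier (?F\<lparr>carrier := H\<rparr>)" using m(2) by simp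
    show "\<forall>j::nat. j \<noteq> 0 \<longrightarrow>
        (zigzag_elem n [^]\<^bsub>?F\<^esub> m) [^]\<^bsub>?F\<lparr>carrier := H\<rparr>\<^esub> j \<noteq> \<one>\<^bsub>?F\<lparr>carrier := H\<rparr>\<^esub>"
      using subgroup_zigzag_power_infinite_order[OF n2 m(1)] by blast
    show "centralizers_commensurable (?F\<lparr>carrier := H\<rparr>) (zigzag_elem n [^]\<^bsub>?F\<^esub> m)"
      by (rule subgroup_centralizers_commensurable[OF n2 H m])
    show "carrier A \<noteq> {\<one>\<^bsub>A\<^esub>}" "carrier B \<noteq> {\<one>\<^bsub>B\<^esub>}" using assms(6,7) by auto
  qed (rule assms)+
  then show ?thesis using k by (simp add: PFB_def)
qed

end
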